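(* Suppose the weight function $w$ satisfies $0<m\le w\le M$ almost everywhere. Then there exists an absolute constant $C>0$ such that for every $n\ge1$ and every $-1<x<1$, $$\lambda_x(-1)\le C\frac{M^2}{m}\cdot\frac{1}{n^2}\quad\text{and}\quad\lambda_x(1)\le C\frac{M^2}{m}\cdot\frac1{n^2}.$$
   Context: A weight function is a non-negative integrable function $w$ on $[-1,1]$ with nonzero integral. Fix $n\ge1$. Let $\varphi$ be the orthonormal polynomial of degree $n$ with positive leading coefficient w.r.t. $w(t)\,dt$ on $[-1,1]$ and $\psi$ the orthonormal polynomial of degree $n-1$ with positive leading coefficient w.r.t. $(1-t^2)w(t)\,dt$. For real $a$ let $P_a(t)=\varphi(t)-a(1-t)\psi(t)$ if $a\ge0$, $P_a(t)=\varphi(t)-a(1+t)\psi(t)$ if $a\le0$; its zeros are $-1<\xi_1(a)<\dots<\xi_n(a)<1$. The zeros of $(1-t^2)\psi(t)$ are $-1=\eta_0<\eta_1<\dots<\eta_n=1$. The following node sets each carry a unique quadrature formula with positive weights exact for all polynomials of degree $\le 2n-1$ with respect to $w$: $\{\xi_i(0)\}_{i=1}^n$; $\{\eta_0,\dots,\eta_n\}$; $\{-1\}\cup\{\xi_i(a)\}_i$ for $0<a<\infty$; $\{\xi_i(a)\}_i\cup\{1\}$ for $-\infty<a<0$. Each $x\in(-1,1)$ is a node of exactly one of them, denoted $\Sigma_x$; $\lambda_x(u)$ is the weight of $u$ in $\Sigma_x$ (and $0$ if $u$ is not a node of $\Sigma_x$). *)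

theory Defs
  imports "HOL-Analysis.Analysis" "HOL-Computational_Algebra.Polynomial"
begin

definition wint :: "(real \<Rightarrow> real) \<Rightarrow> real" where
  "wint f = (LINT t:{-1..1}|lborel. f t)"

definition weight_function :: "(real \<Rightarrow> real) \<Rightarrow> bool" where
  "weight_function w \<longleftrightarrow> (\<forall>t\<in>{-1..1}. 0 \<le> w t) \<and> set_integrable lborel {-1..1} w
     \<and> wint w \<noteq> 0"

definition orthonormal_poly :: "(real \<Rightarrow> real) \<Rightarrow> nat \<Rightarrow> real poly" where
  "orthonormal_poly v k = (THE p. degree p = k \<and> lead_coeff p > 0 \<and>
      (\<forall>q. degree q < k \<longrightarrow> wint (\<lambda>t. poly p t * poly q t * v t) = 0) \<and>
      wint (\<lambda>t. (poly p t)^2 * v t) = 1)"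

definition phi_poly :: "(real \<Rightarrow> real) \<Rightarrow> nat \<Rightarrow> real poly" where
  "phi_poly w n = orthonormal_poly w n"

definition psi_poly :: "(real \<Rightarrow> real) \<Rightarrow> nat \<Rightarrow> real poly" where
  "psi_poly w n = orthonormal_poly (\<lambda>t. (1 - t^2) * w t) (n - 1)"

definition P_poly :: "(real \<Rightarrow> real) \<Rightarrow> nat \<Rightarrow> real \<Rightarrow> real poly" where
  "P_poly w n a = (if a \<ge> 0 then phi_poly w n - smult a ([:1, -1:] * psi_poly w n)
                   else phi_poly w n - smult a ([:1, 1:] * psi_poly w n))"

definition zero_set :: "real poly \<Rightarrow> real set" where
  "zero_set p = {t. poly p t = 0}"

definition node_sets :: "(real \<Rightarrow> real) \<Rightarrow> nat \<Rightarrow> real set set" where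
  "node_sets w n =
     {zero_set (phi_poly w n)}
     \<union> {zero_set ([:1, 0, -1:] * psi_poly w n)}
     \<union> {insert (-1) (zero_set (P_poly w n a)) | a. 0 < a}
     \<union> {insert 1 (zero_set (P_poly w n a)) | a. a < 0}"

definition Sigma :: "(real \<Rightarrow> real) \<Rightarrow> nat \<Rightarrow> real \<Rightarrow> real set" where
  "Sigma w n x = (THE S. S \<in> node_sets w n \<and> x \<in> S)"

definition quad_weights :: "(real \<Rightarrow> real) \<Rightarrow> nat \<Rightarrow> real set \<Rightarrow> real \<Rightarrow> real" where
  "quad_weights w n S = (THE l. (\<forall>u. u \<notin> S \<longrightarrow> l u = 0) \<and>
      (\<forall>p. degree p \<le> 2 * n - 1 \<longrightarrow> (\<Sum>u\<in>S. l u * poly p u) = wint (\<lambda>t. poly p t * w t)))"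

definition lambda_x :: "(real \<Rightarrow> real) \<Rightarrow> nat \<Rightarrow> real \<Rightarrow> real \<Rightarrow> real" where
  "lambda_x w n x u = quad_weights w n (Sigma w n x) u"

end

theory Submission
  imports Defs
begin

text \<open>Fix an endpoint \<open>e = \<plusminus>1\<close>. Every node set of the family carries a positive quadrature formula
  with at most \<open>n + 1\<close> nodes that is exact up to degree \<open>2n - 1\<close>; hence for every \<open>q\<close> of degree
  below \<open>n\<close>, dropping the nonnegative terms at the other nodes gives
  \<open>\<lambda>\<^sub>x(e) q(e)\<^sup>2 \<le> \<integral> q\<^sup>2 w \<le> M \<integral> q\<^sup>2\<close>. Taking for \<open>q\<close> the normalized Christoffel kernel of the
  Legendre weight at \<open>e\<close>, which has \<open>q(e) = 1\<close> and \<open>\<integral> q\<^sup>2 = 2/n\<^sup>2\<close>, yields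
  \<open>\<lambda>\<^sub>x(e) \<le> 2M/n\<^sup>2 \<le> 2 (M\<^sup>2/m)/n\<^sup>2\<close>.

  The polynomials \<open>\<phi>\<close>, \<open>\<psi>\<close> and \<open>P\<^sub>a\<close> behind the
  Gauss, Lobatto and Radau-type node sets are orthogonal or quasi-orthogonal, so by the classical
  sign-change argument their zeros are simple and lie in \<open>(-1,1)\<close>; an interpolatory formula on such
  a node set is exact up to degree \<open>2n - 1\<close>, and testing it against squares of Lagrange-type
  polynomials shows that its weights are nonnegative. Since \<open>\<phi>\<close> and \<open>\<psi>\<close> have no common zero,
  every \<open>x \<in> (-1,1)\<close> lies in exactly one node set, so \<open>\<Sigma>\<^sub>x\<close> is one of these formulas.\<close>

section \<open>Integrals of polynomials against a weight\<close>

lemma set_integrable_times_var: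
  assumes "set_integrable lborel {-1..1::real} f"
  shows "set_integrable lborel {-1..1} (\<lambda>t. t * f t)"
proof -
  let ?f = "\<lambda>x. indicator {-1..1::real} x *\<^sub>R f x"
  have f: "integrable lborel ?f"
    using assms unfolding set_integrable_def .
  show ?thesis unfolding set_integrable_def
  proof (rule Bochner_Integration.integrable_bound[OF f])
    have "(\<lambda>x. indicator {-1..1::real} x *\<^sub>R (x * f x)) = (\<lambda>x. x * ?f x)"
      by auto
    then show "(\<lambda>x. indicator {-1..1::real} x *\<^sub>R (x * f x)) \<in> borel_measurable lborel"
      using borel_measurable_integrable[OF f] by simp
    show "AE x in lborel. norm (indicator {-1..1::real} x *\<^sub>R (x * f x)) \<le> norm (?f x)"
      by (auto simp: indicator_def abs_mult intro!: mult_left_le_one_le)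
  qed
qed

lemma set_integrable_poly_mult:
  assumes "set_integrable lborel {-1..1::real} v"
  shows "set_integrable lborel {-1..1} (\<lambda>t. poly p t * v t)"
proof (induction p)
  case 0
  then show ?case by (simp add: set_integrable_def)
next
  case (pCons a p)
  have "(\<lambda>t. poly (pCons a p) t * v t) = (\<lambda>t. a * v t + t * (poly p t * v t))"
    by (auto simp: algebra_simps)
  moreover have "set_integrable lborel {-1..1} (\<lambda>t. a * v t + t * (poly p t * v t))"
    by (rule set_integral_add(1)) (auto intro: assms set_integrable_times_var pCons.IH)
  ultimately show ?case by simp
qed

definition wint_poly :: "(real \<Rightarrow> real) \<Rightarrow> real poly \<Rightarrow> real" where
  "wint_poly v p = wint (\<lambda>t. poly p t * v t)"

lemma wint_poly_weight_mult: "wint_poly (\<lambda>t. poly g t * v t) p = wint_poly v (g * p)"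
  unfolding wint_poly_def by (simp add: algebra_simps)

lemma wint_poly_0 [simp]: "wint_poly v 0 = 0"
  unfolding wint_poly_def wint_def by simp

abbreviation poly_integral :: "real poly \<Rightarrow> real" where
  "poly_integral \<equiv> wint_poly (\<lambda>_. 1)"

locale positive_weight =
  fixes v :: "real \<Rightarrow> real"
  assumes integrable: "set_integrable lborel {-1..1::real} v"
    and nonneg: "\<And>t. t \<in> {-1..1} \<Longrightarrow> 0 \<le> v t"
    and pos_AE: "AE t in lborel. t \<in> {-1..1} \<longrightarrow> 0 < v t"
begin

lemma set_integrable_poly_weight: "set_integrable lborel {-1..1} (\<lambda>t. poly p t * v t)"
  by (rule set_integrable_poly_mult[OF integrable])

lemma wint_poly_add: "wint_poly v (p + q) = wint_poly v p + wint_poly v q"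
proof -
  have "wint_poly v (p + q) = wint (\<lambda>t. poly p t * v t + poly q t * v t)"
    unfolding wint_poly_def by (simp add: algebra_simps)
  also have "\<dots> = wint_poly v p + wint_poly v q"
    unfolding wint_poly_def wint_def
    by (rule set_integral_add(2)[OF set_integrable_poly_weight set_integrable_poly_weight])
  finally show ?thesis .
qed

lemma wint_poly_smult: "wint_poly v (smult c p) = c * wint_poly v p"
proof -
  have "wint_poly v (smult c p) = wint (\<lambda>t. c * (poly p t * v t))"
    unfolding wint_poly_def by (simp add: algebra_simps)
  also have "\<dots> = c * wint_poly v p"
    unfolding wint_poly_def wint_def by (rule set_integral_mult_right)
  finally show ?thesis .
qed

lemma wint_poly_minus: "wint_poly v (- p) = - wint_poly v p"
  using wint_poly_smult[of "-1" p] by simp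

lemma wint_poly_diff: "wint_poly v (p - q) = wint_poly v p - wint_poly v q"
  using wint_poly_add[of p "-q"] wint_poly_minus[of q] by simp

lemma wint_poly_sum: "wint_poly v (\<Sum>i\<in>A. f i) = (\<Sum>i\<in>A. wint_poly v (f i))"
  by (induction A rule: infinite_finite_induct) (auto simp: wint_poly_add)

lemma AE_poly_weight_nonneg:
  assumes "\<And>t. t \<in> {-1<..<1} \<Longrightarrow> 0 \<le> poly g t"
  shows "AE t in lborel. 0 \<le> indicat_real {-1..1} t *\<^sub>R (poly g t * v t)"
  using AE_lborel_singleton[of "-1::real"] AE_lborel_singleton[of "1::real"]
proof eventually_elim
  case (elim t)
  then show ?case using assms[of t] nonneg[of t] by (auto simp: indicator_def)
qed

lemma wint_poly_nonneg:
  assumes "\<And>t. t \<in> {-1<..<1} \<Longrightarrow> 0 \<le> poly g t"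
  shows "0 \<le> wint_poly v g"
  unfolding wint_poly_def wint_def set_lebesgue_integral_def
  by (rule integral_nonneg_AE[OF AE_poly_weight_nonneg[OF assms]])

lemma wint_poly_pos:
  assumes "\<And>t. t \<in> {-1<..<1} \<Longrightarrow> 0 \<le> poly g t" and "g \<noteq> 0"
  shows "0 < wint_poly v g"
proof (rule ccontr)
  let ?f = "\<lambda>t. indicat_real {-1..1} t *\<^sub>R (poly g t * v t)"
  assume "\<not> 0 < wint_poly v g"
  with wint_poly_nonneg[OF assms(1)] have "integral\<^sup>L lborel ?f = 0"
    unfolding wint_poly_def wint_def set_lebesgue_integral_def by simp
  then have f0: "AE t in lborel. ?f t = 0"
    using integral_nonneg_eq_0_iff_AE[OF set_integrable_poly_weight[unfolded set_integrable_def]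
        AE_poly_weight_nonneg[OF assms(1)]] by simp
  have "AE t in lborel. t \<notin> {t. poly g t = 0}"
    by (rule AE_not_in[OF finite_imp_null_set_lborel[OF poly_roots_finite[OF assms(2)]]])
  with f0 pos_AE have "AE t in lborel. t \<notin> {-1<..<1::real}"
    by eventually_elim (auto simp: indicator_def split: if_splits)
  then have "emeasure lborel {-1<..<1::real} = 0"
    by (subst (asm) AE_iff_measurable[of "{-1<..<1::real}"]) auto
  then show False by simp
qed

lemma positive_weight_poly_mult:
  assumes "\<And>t. t \<in> {-1..1} \<Longrightarrow> 0 \<le> poly g t" "\<And>t. t \<in> {-1<..<1} \<Longrightarrow> 0 < poly g t"
  shows "positive_weight (\<lambda>t. poly g t * v t)"
proof
  show "set_integrable lborel {-1..1} (\<lambda>t. poly g t * v t)"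
    by (rule set_integrable_poly_weight)
  show "0 \<le> poly g t * v t" if "t \<in> {-1..1}" for t
    using assms(1)[OF that] nonneg[OF that] by simp
  show "AE t in lborel. t \<in> {-1..1} \<longrightarrow> 0 < poly g t * v t"
    using pos_AE AE_lborel_singleton[of "-1::real"] AE_lborel_singleton[of "1::real"]
    by eventually_elim (use assms(2) in auto)
qed

lemma wint_poly_square_le:
  assumes "AE t in lborel. t \<in> {-1..1} \<longrightarrow> v t \<le> M"
  shows "wint_poly v (q * q) \<le> M * poly_integral (q * q)"
proof -
  have "wint_poly v (q * q) \<le> (LINT t:{-1..1}|lborel. poly (q * q) t * M)"
    unfolding wint_poly_def wint_def
  proof (rule set_integral_mono_AE[OF set_integrable_poly_weight])
    show "set_integrable lborel {-1..1} (\<lambda>t. poly (q * q) t * M)"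
      by (rule set_integrable_poly_mult) (rule borel_integrable_atLeastAtMost', simp)
    show "AE t\<in>{-1..1} in lborel. poly (q * q) t * v t \<le> poly (q * q) t * M"
      using assms by eventually_elim (auto intro: mult_left_mono)
  qed
  also have "\<dots> = M * poly_integral (q * q)"
    unfolding wint_poly_def wint_def by (simp add: mult.commute)
  finally show ?thesis .
qed

end

interpretation unit_weight: positive_weight "\<lambda>_::real. 1::real"
  by unfold_locales (auto intro: borel_integrable_atLeastAtMost')

section \<open>Orthonormal polynomials\<close>

lemma degree_diff_smult_lead_less:
  fixes p q :: "real poly"
  assumes "degree q \<le> k" "degree p = k" "p \<noteq> 0"
  defines "r \<equiv> q - smult (coeff q k / lead_coeff p) p"
  shows "r = 0 \<or> degree r < k"
proof -
  have le: "degree r \<le> k"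
    unfolding r_def using assms by (intro degree_diff_le) (auto simp: order.trans[OF degree_smult_le])
  have "coeff r k = 0"
    unfolding r_def using assms by auto
  then have "r \<noteq> 0 \<Longrightarrow> degree r \<noteq> k"
    by (metis leading_coeff_0_iff)
  then show ?thesis using le by linarith
qed

definition orthonormal :: "(real \<Rightarrow> real) \<Rightarrow> nat \<Rightarrow> real poly \<Rightarrow> bool" where
  "orthonormal v k p \<longleftrightarrow> degree p = k \<and> lead_coeff p > 0 \<and>
      (\<forall>q. degree q < k \<longrightarrow> wint_poly v (p * q) = 0) \<and> wint_poly v (p * p) = 1"

lemma orthonormal_iff_wint: "orthonormal v k p \<longleftrightarrow> (degree p = k \<and> lead_coeff p > 0 \<and>
      (\<forall>q. degree q < k \<longrightarrow> wint (\<lambda>t. poly p t * poly q t * v t) = 0) \<and>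
      wint (\<lambda>t. (poly p t)^2 * v t) = 1)"
  unfolding orthonormal_def wint_poly_def by (simp add: power2_eq_square)

lemma orthonormal_orthogonal:
  "orthonormal v k p \<Longrightarrow> q = 0 \<or> degree q < k \<Longrightarrow> wint_poly v (p * q) = 0"
  unfolding orthonormal_def by auto

lemma orthonormal_nonzero: "orthonormal v k p \<Longrightarrow> p \<noteq> 0"
  unfolding orthonormal_def by auto

context positive_weight
begin

lemma orthonormal_wint_poly_mult:
  assumes "orthonormal v k p" "degree q \<le> k"
  shows "wint_poly v (p * q) = coeff q k / lead_coeff p"
proof -
  let ?c = "coeff q k / lead_coeff p"
  let ?r = "q - smult ?c p"
  have p: "p \<noteq> 0" "degree p = k"
    using assms unfolding orthonormal_def by auto
  have "p * q = smult ?c (p * p) + p * ?r"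
    by (simp add: algebra_simps)
  then have "wint_poly v (p * q) = ?c * wint_poly v (p * p) + wint_poly v (p * ?r)"
    by (simp only: wint_poly_add wint_poly_smult)
  also have "wint_poly v (p * ?r) = 0"
    by (rule orthonormal_orthogonal[OF assms(1) degree_diff_smult_lead_less[OF assms(2) p(2,1)]])
  finally show ?thesis
    using assms(1) unfolding orthonormal_def by simp
qed

lemma orthonormal_unique:
  assumes p: "orthonormal v k p" and p': "orthonormal v k p'"
  shows "p = p'"
proof -
  have lp: "lead_coeff p > 0" "lead_coeff p' > 0" "degree p = k" "degree p' = k"
    using assms unfolding orthonormal_def by auto
  have "lead_coeff p' / lead_coeff p = lead_coeff p / lead_coeff p'"
    using orthonormal_wint_poly_mult[OF p, of p'] orthonormal_wint_poly_mult[OF p', of p] lp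
    by (simp add: mult.commute)
  then have "(lead_coeff p' - lead_coeff p) * (lead_coeff p' + lead_coeff p) = 0"
    using lp by (simp add: field_simps)
  then have same_lead: "lead_coeff p' = lead_coeff p"
    using lp by simp
  let ?d = "p - p'"
  have "p' - smult (coeff p' k / lead_coeff p) p = - ?d"
    using lp same_lead by simp
  moreover have "p' - smult (coeff p' k / lead_coeff p) p = 0
      \<or> degree (p' - smult (coeff p' k / lead_coeff p) p) < k"
    by (rule degree_diff_smult_lead_less) (use lp orthonormal_nonzero[OF p] in auto)
  ultimately have d: "?d = 0 \<or> degree ?d < k"
    by (simp only: degree_minus neg_equal_0_iff_equal)
  have "wint_poly v (?d * ?d) = wint_poly v (p * ?d) - wint_poly v (p' * ?d)"
    by (simp only: left_diff_distrib wint_poly_diff)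
  also have "\<dots> = 0"
    using orthonormal_orthogonal[OF p d] orthonormal_orthogonal[OF p' d] by simp
  finally have "wint_poly v (?d * ?d) = 0" .
  moreover have "?d \<noteq> 0 \<Longrightarrow> 0 < wint_poly v (?d * ?d)"
    by (rule wint_poly_pos) auto
  ultimately show ?thesis by force
qed

lemma wint_poly_orthogonal_to_span:
  assumes P: "\<And>i. i \<le> k \<Longrightarrow> degree (P i) = i \<and> P i \<noteq> 0"
    and r: "\<And>i. i \<le> k \<Longrightarrow> wint_poly v (r * P i) = 0"
  shows "degree q \<le> k \<Longrightarrow> wint_poly v (r * q) = 0"
proof (induction "degree q" arbitrary: q rule: less_induct)
  case less
  show ?case
  proof (cases "q = 0")
    case False
    define d where "d = degree q"
    let ?c = "coeff q d / lead_coeff (P d)"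
    let ?q' = "q - smult ?c (P d)"
    have dk: "d \<le> k" using less d_def by simp
    have "?q' = 0 \<or> degree ?q' < d"
      by (rule degree_diff_smult_lead_less) (use P[OF dk] d_def in auto)
    then have "wint_poly v (r * ?q') = 0"
      using less d_def by (cases "?q' = 0") auto
    moreover have "r * q = smult ?c (r * P d) + r * ?q'"
      by (simp add: algebra_simps)
    ultimately show ?thesis
      using r[OF dk] by (simp add: wint_poly_add wint_poly_smult)
  qed simp
qed

lemma orthonormal_wint_poly_pair:
  assumes p: "orthonormal v i p" and q: "orthonormal v j q"
  shows "wint_poly v (q * p) = (if j = i then 1 else 0)"
proof (cases i j rule: linorder_cases)
  case less
  then show ?thesis
    using orthonormal_orthogonal[OF q, of p] p unfolding orthonormal_def by simp
next
  case equal
  then show ?thesis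
    using orthonormal_unique[OF p] q unfolding orthonormal_def by simp
next
  case greater
  then show ?thesis
    using orthonormal_orthogonal[OF p, of q] q unfolding orthonormal_def by (simp add: mult.commute)
qed

lemma orthonormal_normalize:
  assumes "degree r = k" "lead_coeff r > 0" "\<And>q. degree q < k \<Longrightarrow> wint_poly v (r * q) = 0"
  shows "orthonormal v k (smult (1 / sqrt (wint_poly v (r * r))) r)"
proof -
  define s where "s = 1 / sqrt (wint_poly v (r * r))"
  have "r \<noteq> 0"
    using assms(2) by auto
  then have rr: "wint_poly v (r * r) > 0"
    by (intro wint_poly_pos) auto
  show ?thesis
    unfolding orthonormal_def s_def[symmetric]
  proof (intro conjI allI impI)
    show "degree (smult s r) = k" "lead_coeff (smult s r) > 0"
      using assms(1,2) rr by (simp_all add: s_def)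
    show "wint_poly v (smult s r * q) = 0" if "degree q < k" for q
      using assms(3)[OF that] by (simp add: wint_poly_smult)
    have "wint_poly v (smult s r * smult s r) = s * s * wint_poly v (r * r)"
      by (simp add: wint_poly_smult mult_smult_right mult_smult_left)
    then show "wint_poly v (smult s r * smult s r) = 1"
      using rr by (simp add: s_def)
  qed
qed

lemma orthogonal_monic_exists:
  assumes P: "\<And>j. j \<le> k \<Longrightarrow> orthonormal v j (P j)"
  shows "\<exists>r. degree r = Suc k \<and> lead_coeff r = 1 \<and> (\<forall>q. degree q < Suc k \<longrightarrow> wint_poly v (r * q) = 0)"
proof -
  have Pd: "degree (P j) = j" if "j \<le> k" for j
    using P[OF that] unfolding orthonormal_def by blast
  have PP: "wint_poly v (P j * P i) = (if j = i then 1 else 0)" if "i \<le> k" "j \<le> k" for i j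
    using orthonormal_wint_poly_pair[OF P P] that by blast
  define c where "c j = wint_poly v (monom 1 (Suc k) * P j)" for j
  define r where "r = monom 1 (Suc k) - (\<Sum>j\<le>k. smult (c j) (P j))"
  have "degree (\<Sum>j\<le>k. smult (c j) (P j)) \<le> k"
    by (rule degree_sum_le) (auto intro: order.trans[OF degree_smult_le] simp: Pd)
  then have "coeff r (Suc k) = 1" "degree r \<le> Suc k"
    unfolding r_def by (auto simp: coeff_eq_0 degree_monom_le intro!: degree_diff_le)
  then have r: "degree r = Suc k" "lead_coeff r = 1"
    using le_degree[of r "Suc k"] by auto
  have rP: "wint_poly v (r * P i) = 0" if "i \<le> k" for i
  proof -
    have "r * P i = monom 1 (Suc k) * P i - (\<Sum>j\<le>k. smult (c j) (P j * P i))"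
      unfolding r_def by (simp add: left_diff_distrib sum_distrib_right mult_smult_left)
    then have "wint_poly v (r * P i) = c i - (\<Sum>j\<le>k. c j * wint_poly v (P j * P i))"
      by (simp add: wint_poly_diff wint_poly_sum wint_poly_smult c_def mult.commute)
    also have "(\<Sum>j\<le>k. c j * wint_poly v (P j * P i)) = (\<Sum>j\<le>k. if j = i then c j else 0)"
      by (rule sum.cong) (simp_all add: PP that)
    finally show ?thesis
      using that by simp
  qed
  have "wint_poly v (r * q) = 0" if "degree q < Suc k" for q
    by (rule wint_poly_orthogonal_to_span[of k P]) (use Pd rP that orthonormal_nonzero[OF P] in auto)
  with r show ?thesis
    by blast
qed

lemma orthonormal_family_exists: "\<exists>P. \<forall>j\<le>k. orthonormal v j (P j)"
proof (induction k)
  case 0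
  have "orthonormal v 0 (smult (1 / sqrt (wint_poly v (1 * 1))) 1)"
    by (rule orthonormal_normalize) auto
  then show ?case
    by (intro exI[of _ "\<lambda>_. smult (1 / sqrt (wint_poly v (1 * 1))) 1"]) simp
next
  case (Suc k)
  then obtain P where P: "\<And>j. j \<le> k \<Longrightarrow> orthonormal v j (P j)"
    by blast
  obtain r where r: "degree r = Suc k" "lead_coeff r = 1" "\<And>q. degree q < Suc k \<Longrightarrow> wint_poly v (r * q) = 0"
    using orthogonal_monic_exists[OF P] by blast
  have "orthonormal v (Suc k) (smult (1 / sqrt (wint_poly v (r * r))) r)"
    by (rule orthonormal_normalize) (use r in auto)
  then show ?case
    using P by (intro exI[of _ "P(Suc k := smult (1 / sqrt (wint_poly v (r * r))) r)"]) auto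
qed

lemma orthonormal_orthonormal_poly: "orthonormal v k (orthonormal_poly v k)"
proof -
  obtain p where "orthonormal v k p"
    using orthonormal_family_exists[of k] by auto
  then have "orthonormal v k (THE p. orthonormal v k p)"
    using orthonormal_unique by (blast intro: theI)
  then show ?thesis
    unfolding orthonormal_poly_def orthonormal_iff_wint[symmetric] .
qed

end

section \<open>Zeros of orthogonal and quasi-orthogonal polynomials\<close>

definition poly_of_roots :: "real set \<Rightarrow> real poly" where
  "poly_of_roots Z = (\<Prod>z\<in>Z. [:-z, 1:])"

lemma poly_of_roots_nonzero: "poly_of_roots Z \<noteq> 0"
  unfolding poly_of_roots_def by (cases "finite Z") (auto simp: prod_zero_iff)

lemma degree_poly_of_roots: "finite Z \<Longrightarrow> degree (poly_of_roots Z) = card Z"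
  unfolding poly_of_roots_def by (subst degree_prod_eq_sum_degree) auto

lemma lead_coeff_poly_of_roots: "lead_coeff (poly_of_roots Z) = 1"
  unfolding poly_of_roots_def by (simp add: lead_coeff_prod)

lemma poly_poly_of_roots: "poly (poly_of_roots Z) t = (\<Prod>z\<in>Z. t - z)"
  unfolding poly_of_roots_def by (simp add: poly_prod)

lemma poly_of_roots_insert:
  "finite Z \<Longrightarrow> z \<notin> Z \<Longrightarrow> poly_of_roots (insert z Z) = [:-z, 1:] * poly_of_roots Z"
  unfolding poly_of_roots_def by simp

lemma poly_poly_of_roots_eq_0_iff: "finite Z \<Longrightarrow> poly (poly_of_roots Z) t = 0 \<longleftrightarrow> t \<in> Z"
  unfolding poly_poly_of_roots by auto

lemma order_poly_of_roots:
  assumes "finite Z"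
  shows "order a (poly_of_roots Z) = (if a \<in> Z then 1 else 0)"
  using assms
proof (induction Z rule: finite_induct)
  case empty
  then show ?case by (simp add: poly_of_roots_def order_0I)
next
  case (insert z Z)
  have "order a (poly_of_roots (insert z Z)) = order a [:-z, 1:] + order a (poly_of_roots Z)"
    unfolding poly_of_roots_insert[OF insert(1,2)]
    by (rule order_mult) (auto simp only: mult_eq_0_iff poly_of_roots_nonzero pCons_eq_0_iff)
  moreover have "order a [:-z, 1:] = (if a = z then 1 else 0)"
    using order_power_n_n[of a 1] by (auto intro!: order_0I)
  ultimately show ?case using insert by auto
qed

lemma poly_of_roots_dvd:
  assumes "finite Z" "\<And>z. z \<in> Z \<Longrightarrow> poly p z = 0"
  shows "poly_of_roots Z dvd p"
  using assms
proof (induction Z arbitrary: p rule: finite_induct)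
  case empty
  then show ?case by (simp add: poly_of_roots_def)
next
  case (insert z Z)
  obtain p1 where p1: "p = [:-z, 1:] * p1"
    using insert(4)[of z] by (auto simp: poly_eq_0_iff_dvd elim: dvdE)
  have "poly p1 y = 0" if "y \<in> Z" for y
    using insert(4)[of y] that insert(2) p1 by auto
  then have "poly_of_roots Z dvd p1"
    using insert(3) by blast
  then show ?case
    unfolding poly_of_roots_insert[OF insert(1,2)] p1 by (rule mult_dvd_mono[OF dvd_refl])
qed

lemma poly_of_roots_endpoint_signs:
  assumes "Z \<subseteq> {-1<..<1}"
  shows "poly (poly_of_roots Z) 1 > 0" "(-1)^card Z * poly (poly_of_roots Z) (-1) > 0"
proof -
  show "poly (poly_of_roots Z) 1 > 0"
    unfolding poly_poly_of_roots by (rule prod_pos) (use assms in auto)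
  have "(\<Prod>z\<in>Z. -1 - z) = (\<Prod>z\<in>Z. (-1) * (1 + z))"
    by (rule prod.cong) auto
  also have "\<dots> = (-1)^card Z * (\<Prod>z\<in>Z. 1 + z)"
    by (simp only: prod.distrib prod_constant)
  finally have "(-1)^card Z * poly (poly_of_roots Z) (-1) = ((-1)^card Z * (-1)^card Z) * (\<Prod>z\<in>Z. 1 + z)"
    unfolding poly_poly_of_roots by simp
  also have "(-1::real)^card Z * (-1)^card Z = 1"
    by (simp flip: power_add)
  finally have "(-1)^card Z * poly (poly_of_roots Z) (-1) = (\<Prod>z\<in>Z. 1 + z)"
    by simp
  also have "\<dots> > 0"
    by (rule prod_pos) (use assms in auto)
  finally show "(-1)^card Z * poly (poly_of_roots Z) (-1) > 0" .
qed

lemma poly_eq_smult_poly_of_roots: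
  fixes P :: "real poly"
  assumes "P \<noteq> 0" "finite Z" "\<And>z. z \<in> Z \<Longrightarrow> poly P z = 0" "degree P \<le> card Z"
  shows "P = smult (lead_coeff P) (poly_of_roots Z)" "zero_set P = Z" "card Z = degree P"
proof -
  obtain g where g: "P = poly_of_roots Z * g"
    using poly_of_roots_dvd[OF assms(2,3)] by (auto elim: dvdE)
  have "g \<noteq> 0"
    using g assms(1) by auto
  then have "degree P = card Z + degree g"
    using g poly_of_roots_nonzero by (simp add: degree_mult_eq degree_poly_of_roots[OF assms(2)])
  then have "degree g = 0" and card: "card Z = degree P"
    using assms(4) by auto
  then obtain c where c: "g = [:c:]"
    by (metis degree_eq_zeroE)
  then have "lead_coeff P = c"
    using g by (simp add: lead_coeff_mult lead_coeff_poly_of_roots)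
  then show P: "P = smult (lead_coeff P) (poly_of_roots Z)"
    using g c by (simp add: lead_coeff_poly_of_roots)
  show "card Z = degree P" by (fact card)
  have "lead_coeff P \<noteq> 0"
    using assms(1) by simp
  then show "zero_set P = Z"
    unfolding zero_set_def by (subst P) (auto simp: poly_poly_of_roots_eq_0_iff[OF assms(2)])
qed

lemma poly_constant_sign_if_no_roots:
  fixes f :: "real poly"
  assumes "\<And>z. z \<in> {-1<..<1} \<Longrightarrow> poly f z \<noteq> 0"
  shows "(\<forall>t\<in>{-1<..<1}. 0 \<le> poly f t) \<or> (\<forall>t\<in>{-1<..<1}. poly f t \<le> 0)"
proof (rule ccontr)
  assume "\<not> ?thesis"
  then obtain t1 t2 where t: "t1 \<in> {-1<..<1}" "t2 \<in> {-1<..<1}" "poly f t1 < 0" "poly f t2 > 0"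
    by (auto simp: not_le)
  have "\<exists>x. min t1 t2 < x \<and> x < max t1 t2 \<and> poly f x = 0"
  proof (cases "t1 < t2")
    case True
    then show ?thesis using poly_IVT_pos[of t1 t2 f] t by auto
  next
    case False
    then have "t2 < t1" using t by (cases "t1 = t2") auto
    then show ?thesis using poly_IVT_neg[of t2 t1 f] t by auto
  qed
  then obtain x where "min t1 t2 < x" "x < max t1 t2" "poly f x = 0"
    by blast
  then show False
    using assms[of x] t(1,2) by (auto simp: min_def max_def split: if_splits)
qed

lemma poly_constant_sign_if_even_orders:
  fixes f :: "real poly"
  assumes "f \<noteq> 0" "\<And>z. z \<in> {-1<..<1} \<Longrightarrow> poly f z = 0 \<Longrightarrow> even (order z f)"
  shows "(\<forall>t\<in>{-1<..<1}. 0 \<le> poly f t) \<or> (\<forall>t\<in>{-1<..<1}. poly f t \<le> 0)"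
  using assms
proof (induction "degree f" arbitrary: f rule: less_induct)
  case less
  show ?case
  proof (cases "\<exists>z\<in>{-1<..<1}. poly f z = 0")
    case True
    then obtain z where z: "z \<in> {-1<..<1}" "poly f z = 0" by blast
    have "order z f \<noteq> 0"
      using z less(2) order_root by blast
    with less(3)[OF z] have "2 \<le> order z f"
      by presburger
    then have "[:-z, 1:]^2 dvd f"
      by (simp add: order_divides)
    then obtain g where g: "f = [:-z, 1:]^2 * g"
      by (auto elim: dvdE)
    have "g \<noteq> 0"
      using g less(2) by auto
    then have "degree g < degree f"
      using g by (simp add: degree_mult_eq degree_power_eq)
    moreover have "even (order y g)" if "y \<in> {-1<..<1}" "poly g y = 0" for y
    proof -
      have "even (order y f)"
        using less(3) that g by simp
      moreover have "order y f = order y ([:-z, 1:]^2) + order y g"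
        using g less(2) by (simp add: order_mult)
      moreover have "order y ([:-z, 1:]^2) = (if y = z then 2 else 0)"
        using order_power_n_n[of y 2] by (auto intro!: order_0I)
      ultimately show ?thesis by (simp split: if_splits)
    qed
    ultimately have "(\<forall>t\<in>{-1<..<1}. 0 \<le> poly g t) \<or> (\<forall>t\<in>{-1<..<1}. poly g t \<le> 0)"
      using less(1) \<open>g \<noteq> 0\<close> by blast
    then show ?thesis
      using g by (auto intro: mult_nonneg_nonneg mult_nonneg_nonpos)
  qed (use poly_constant_sign_if_no_roots in blast)
qed

definition sign_change_points :: "real poly \<Rightarrow> real set" where
  "sign_change_points P = {z \<in> {-1<..<1}. poly P z = 0 \<and> odd (order z P)}"

lemma finite_sign_change_points: "P \<noteq> 0 \<Longrightarrow> finite (sign_change_points P)"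
  unfolding sign_change_points_def
  by (rule finite_subset[OF _ poly_roots_finite]) auto

lemma sign_change_points_subset: "sign_change_points P \<subseteq> {-1<..<1}"
  unfolding sign_change_points_def by blast

lemma sign_change_points_cofactor_no_simple_root:
  assumes "P = poly_of_roots (sign_change_points P) * g" "P \<noteq> 0"
    and "\<beta> \<in> {-1<..<1}" "order \<beta> g = 1"
  shows False
proof -
  have order: "order \<beta> P = (if \<beta> \<in> sign_change_points P then 1 else 0) + 1"
    using assms(4) order_mult[of "poly_of_roots (sign_change_points P)" g \<beta>] assms(1,2)
    by (simp add: order_poly_of_roots[OF finite_sign_change_points[OF assms(2)]])
  moreover have "poly P \<beta> = 0"
    using order_root[of P \<beta>] order by simp
  ultimately show False
    using assms(3) unfolding sign_change_points_def by (auto split: if_splits)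
qed

lemma linear_poly_simple_root_inside:
  fixes g :: "real poly"
  assumes "degree g = 1" "poly g 1 > 0" "poly g (-1) < 0"
  obtains \<beta> where "\<beta> \<in> {-1<..<1}" "order \<beta> g = 1"
proof -
  obtain \<beta> where \<beta>: "-1 < \<beta>" "\<beta> < 1" "poly g \<beta> = 0"
    using poly_IVT_pos[of "-1" 1 g] assms(2,3) by auto
  have "g \<noteq> 0"
    using assms(1) by auto
  then have "order \<beta> g = 1"
    using order_degree[of g \<beta>] assms(1) order_root[of g \<beta>] \<beta>(3) by linarith
  then show ?thesis
    using that \<beta> by simp
qed

definition splits_inside :: "real poly \<Rightarrow> bool" where
  "splits_inside P \<longleftrightarrow> zero_set P \<subseteq> {-1<..<1} \<and> card (zero_set P) = degree P \<and>
     P = smult (lead_coeff P) (poly_of_roots (zero_set P))"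

lemma splits_inside_if_sign_changes:
  assumes "P \<noteq> 0" "degree P \<le> card (sign_change_points P)"
  shows "splits_inside P"
proof -
  have "\<And>z. z \<in> sign_change_points P \<Longrightarrow> poly P z = 0"
    unfolding sign_change_points_def by simp
  note roots = poly_eq_smult_poly_of_roots[OF assms(1) finite_sign_change_points[OF assms(1)] this assms(2)]
  have "zero_set P = sign_change_points P"
    by (rule roots(2))
  then show ?thesis
    unfolding splits_inside_def using roots(1,3) sign_change_points_subset by simp
qed

lemma splits_inside_endpoint_signs:
  assumes "splits_inside P" "lead_coeff P > 0"
  shows "poly P 1 > 0" "(-1)^degree P * poly P (-1) > 0"
proof -
  have P: "P = smult (lead_coeff P) (poly_of_roots (zero_set P))"
    and "zero_set P \<subseteq> {-1<..<1}" "card (zero_set P) = degree P"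
    using assms(1) unfolding splits_inside_def by auto
  note signs = poly_of_roots_endpoint_signs[OF this(2), unfolded this(3)]
  show "poly P 1 > 0"
    using assms(2) signs(1) by (subst P) simp
  show "(-1)^degree P * poly P (-1) > 0"
    using assms(2) signs(2) by (subst P) (simp add: mult.left_commute)
qed

lemma poly_of_roots_union:
  "finite A \<Longrightarrow> finite B \<Longrightarrow> A \<inter> B = {} \<Longrightarrow> poly_of_roots (A \<union> B) = poly_of_roots A * poly_of_roots B"
  unfolding poly_of_roots_def by (rule prod.union_disjoint)

lemma poly_of_roots_zero_set:
  assumes "splits_inside P" "P \<noteq> 0"
  shows "poly_of_roots (zero_set P) = smult (1 / lead_coeff P) P"
proof -
  have "smult (1 / lead_coeff P) P = smult (1 / lead_coeff P * lead_coeff P) (poly_of_roots (zero_set P))"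
    using assms(1) unfolding splits_inside_def by (metis smult_smult)
  then show ?thesis
    using assms(2) by simp
qed

context positive_weight
begin

text \<open>Otherwise \<open>P\<close> times the product of the \<open>t - z\<close> over its sign changes would have constant sign
  on \<open>(-1,1)\<close> and vanishing integral.\<close>
lemma card_sign_change_points_ge:
  assumes P0: "P \<noteq> 0" and orth: "\<And>q. degree q < r \<Longrightarrow> wint_poly v (P * q) = 0"
  shows "r \<le> card (sign_change_points P)"
proof (rule ccontr)
  define Z where "Z = sign_change_points P"
  define q where "q = poly_of_roots Z"
  assume "\<not> r \<le> card (sign_change_points P)"
  then have "degree q < r"
    unfolding q_def Z_def using degree_poly_of_roots[OF finite_sign_change_points[OF P0]] by simp
  then have Pq: "wint_poly v (P * q) = 0"
    by (rule orth)
  have Pq0: "P * q \<noteq> 0"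
    using P0 poly_of_roots_nonzero unfolding q_def by simp
  have "even (order y (P * q))" if "y \<in> {-1<..<1}" "poly (P * q) y = 0" for y
  proof -
    have "order y (P * q) = order y P + (if y \<in> Z then 1 else 0)"
      using Pq0 finite_sign_change_points[OF P0]
      by (simp add: order_mult q_def Z_def order_poly_of_roots)
    moreover have "y \<in> Z \<longleftrightarrow> odd (order y P)"
      using that(1) P0 order_root[of P y] unfolding Z_def sign_change_points_def by auto
    ultimately show ?thesis by simp
  qed
  then consider "\<forall>t\<in>{-1<..<1}. 0 \<le> poly (P * q) t" | "\<forall>t\<in>{-1<..<1}. 0 \<le> poly (- (P * q)) t"
    using poly_constant_sign_if_even_orders[OF Pq0] by fastforce
  then show False
  proof cases
    case 1
    then show False using wint_poly_pos[of "P * q"] Pq0 Pq by simp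
  next
    case 2
    then show False using wint_poly_pos[of "- (P * q)"] Pq0 Pq wint_poly_minus by simp
  qed
qed

lemma splits_inside_if_orthogonal:
  assumes "P \<noteq> 0" "\<And>q. degree q < degree P \<Longrightarrow> wint_poly v (P * q) = 0"
  shows "splits_inside P"
  by (rule splits_inside_if_sign_changes[OF assms(1) card_sign_change_points_ge[OF assms]])

text \<open>With only \<open>n - 1\<close> sign changes, the remaining linear factor of \<open>P\<close> would take opposite signs
  at \<open>\<plusminus>1\<close>, and its zero would be an \<open>n\<close>-th sign change.\<close>
lemma splits_inside_if_quasi_orthogonal:
  assumes P0: "P \<noteq> 0" and deg: "1 \<le> degree P"
    and orth: "\<And>q. degree q < degree P - 1 \<Longrightarrow> wint_poly v (P * q) = 0"
    and pos_1: "poly P 1 > 0" and pos_m1: "(-1)^degree P * poly P (-1) > 0"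
  shows "splits_inside P"
proof -
  define n where "n = degree P"
  define Z where "Z = sign_change_points P"
  have finZ: "finite Z"
    unfolding Z_def by (rule finite_sign_change_points[OF P0])
  have "card Z \<noteq> n - 1"
  proof
    assume card: "card Z = n - 1"
    define R where "R = poly_of_roots Z"
    obtain g where g: "P = R * g"
      using poly_of_roots_dvd[OF finZ, of P] unfolding R_def Z_def sign_change_points_def
      by (auto elim: dvdE)
    have "n = card Z + degree g"
      unfolding n_def g R_def using g P0 poly_of_roots_nonzero
      by (simp add: degree_mult_eq degree_poly_of_roots[OF finZ])
    then have "degree g = 1"
      using card deg n_def by linarith
    moreover have R_signs: "poly R 1 > 0" "(-1)^(n-1) * poly R (-1) > 0"
      using poly_of_roots_endpoint_signs[OF sign_change_points_subset[of P]]
      unfolding R_def Z_def[symmetric] card by auto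
    then have "poly g 1 > 0"
      using pos_1 unfolding g by (simp add: zero_less_mult_iff)
    moreover have "n = Suc (n - 1)"
      using deg n_def by simp
    then have "(-1::real)^n = - ((-1)^(n-1))"
      by (metis mult_minus1 power_Suc)
    then have "(-1)^(n-1) * poly R (-1) * poly g (-1) < 0"
      using pos_m1 unfolding n_def g by simp
    then have "poly g (-1) < 0"
      using R_signs(2) mult_nonneg_nonneg[of "(-1)^(n-1) * poly R (-1)" "poly g (-1)"] by linarith
    ultimately obtain \<beta> where "\<beta> \<in> {-1<..<1}" "order \<beta> g = 1"
      using linear_poly_simple_root_inside by blast
    then show False
      using sign_change_points_cofactor_no_simple_root[of P g \<beta>] g P0 unfolding R_def Z_def by blast
  qed
  moreover have "n - 1 \<le> card Z"
    unfolding Z_def n_def by (rule card_sign_change_points_ge[OF P0 orth])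
  ultimately have "degree P \<le> card (sign_change_points P)"
    unfolding n_def Z_def by linarith
  then show ?thesis
    by (rule splits_inside_if_sign_changes[OF P0])
qed

end

section \<open>Interpolatory quadrature\<close>

definition lagrange_basis :: "real set \<Rightarrow> real \<Rightarrow> real poly" where
  "lagrange_basis S u = smult (1 / (\<Prod>v\<in>S-{u}. u - v)) (poly_of_roots (S - {u}))"

lemma poly_lagrange_basis:
  assumes "finite S" "u \<in> S" "y \<in> S"
  shows "poly (lagrange_basis S u) y = (if y = u then 1 else 0)"
proof (cases "y = u")
  case True
  have "(\<Prod>v\<in>S-{u}. u - v) \<noteq> 0"
    using assms(1) by (auto simp: prod_zero_iff)
  then show ?thesis
    using True by (simp add: lagrange_basis_def poly_poly_of_roots)
next
  case False
  then have "(\<Prod>v\<in>S-{u}. y - v) = 0"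
    using assms by (auto simp: prod_zero_iff)
  then show ?thesis
    using False by (simp add: lagrange_basis_def poly_poly_of_roots)
qed

lemma degree_lagrange_basis:
  assumes "finite S" "u \<in> S"
  shows "degree (lagrange_basis S u) = card S - 1"
proof -
  have "(\<Prod>v\<in>S-{u}. u - v) \<noteq> 0"
    using assms(1) by (auto simp: prod_zero_iff)
  then show ?thesis
    using assms by (simp add: lagrange_basis_def degree_poly_of_roots)
qed

lemma sum_poly_lagrange_basis:
  assumes "finite S" "y \<in> S"
  shows "(\<Sum>u\<in>S. c u * poly (lagrange_basis S u) y) = c y"
proof -
  have "(\<Sum>u\<in>S. c u * poly (lagrange_basis S u) y) = (\<Sum>u\<in>S. if u = y then c u else 0)"
    by (rule sum.cong) (use assms poly_lagrange_basis in auto)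
  then show ?thesis
    using assms by simp
qed

lemma lagrange_interpolation:
  assumes "finite S" "degree r < card S"
  shows "r = (\<Sum>u\<in>S. smult (poly r u) (lagrange_basis S u))"
proof (rule ccontr)
  define d where "d = r - (\<Sum>u\<in>S. smult (poly r u) (lagrange_basis S u))"
  assume "r \<noteq> (\<Sum>u\<in>S. smult (poly r u) (lagrange_basis S u))"
  then have d0: "d \<noteq> 0"
    unfolding d_def by simp
  have "degree (\<Sum>u\<in>S. smult (poly r u) (lagrange_basis S u)) \<le> card S - 1"
    by (rule degree_sum_le)
      (use assms degree_lagrange_basis in \<open>auto intro: order.trans[OF degree_smult_le]\<close>)
  then have "degree d < card S"
    unfolding d_def using assms(2) degree_diff_le[of r "card S - 1"] by fastforce
  moreover have "S \<subseteq> {t. poly d t = 0}"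
    using sum_poly_lagrange_basis[OF assms(1)] by (auto simp: d_def poly_sum)
  then have "card S \<le> card {t. poly d t = 0}"
    by (rule card_mono[OF poly_roots_finite[OF d0]])
  ultimately show False
    using card_poly_roots_bound[OF d0] by linarith
qed

definition exact_quadrature :: "(real \<Rightarrow> real) \<Rightarrow> nat \<Rightarrow> real set \<Rightarrow> (real \<Rightarrow> real) \<Rightarrow> bool" where
  "exact_quadrature v n S l \<longleftrightarrow> (\<forall>u. u \<notin> S \<longrightarrow> l u = 0) \<and>
      (\<forall>p. degree p \<le> 2 * n - 1 \<longrightarrow> (\<Sum>u\<in>S. l u * poly p u) = wint_poly v p)"

lemma exact_quadrature_at_node:
  assumes "finite S" "exact_quadrature v n S l" "u \<in> S" "degree p \<le> 2 * n - 1"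
    and "\<And>y. y \<in> S \<Longrightarrow> y \<noteq> u \<Longrightarrow> poly p y = 0"
  shows "l u * poly p u = wint_poly v p"
proof -
  have "(\<Sum>y\<in>S. l y * poly p y) = l u * poly p u + (\<Sum>y\<in>S-{u}. l y * poly p y)"
    by (rule sum.remove[OF assms(1,3)])
  also have "(\<Sum>y\<in>S-{u}. l y * poly p y) = 0"
    using assms(5) by (intro sum.neutral) simp
  finally show ?thesis
    using assms(2,4) unfolding exact_quadrature_def by simp
qed

lemma exact_quadrature_unique:
  assumes "finite S" "card S \<le> 2 * n" "exact_quadrature v n S l1" "exact_quadrature v n S l2"
  shows "l1 = l2"
proof
  fix u
  show "l1 u = l2 u"
  proof (cases "u \<in> S")
    case True
    have deg: "degree (lagrange_basis S u) \<le> 2 * n - 1"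
      using degree_lagrange_basis[OF assms(1) True] assms(2) by simp
    have vanish: "poly (lagrange_basis S u) y = 0" if "y \<in> S" "y \<noteq> u" for y
      using poly_lagrange_basis[OF assms(1) True that(1)] that(2) by simp
    show ?thesis
      using exact_quadrature_at_node[OF assms(1,3) True deg vanish]
        exact_quadrature_at_node[OF assms(1,4) True deg vanish]
        poly_lagrange_basis[OF assms(1) True True] by simp
  next
    case False
    then show ?thesis
      using assms(3,4) unfolding exact_quadrature_def by auto
  qed
qed

lemma quad_weights_eq:
  assumes "finite S" "card S \<le> 2 * n" "exact_quadrature v n S l"
  shows "quad_weights v n S = l"
proof -
  have "(THE l. exact_quadrature v n S l) = l"
    by (rule the_equality) (use assms exact_quadrature_unique in blast)+
  then show ?thesis
    unfolding quad_weights_def exact_quadrature_def wint_poly_def .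
qed

context positive_weight
begin

lemma wint_poly_lagrange:
  assumes "finite S" "degree r < card S"
  shows "wint_poly v r = (\<Sum>u\<in>S. poly r u * wint_poly v (lagrange_basis S u))"
proof -
  have "wint_poly v r = wint_poly v (\<Sum>u\<in>S. smult (poly r u) (lagrange_basis S u))"
    using arg_cong[OF lagrange_interpolation[OF assms], of "wint_poly v"] .
  then show ?thesis
    by (simp add: wint_poly_sum wint_poly_smult)
qed

lemma wint_poly_mod_poly_of_roots:
  assumes n: "1 \<le> n" and S: "finite S" and deg_p: "degree p \<le> 2 * n - 1"
    and orth: "\<And>h. degree h < 2 * n - card S \<Longrightarrow> wint_poly v (poly_of_roots S * h) = 0"
  shows "wint_poly v p = wint_poly v (p mod poly_of_roots S)"
proof -
  define \<omega> where "\<omega> = poly_of_roots S"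
  define h where "h = p div \<omega>"
  define r where "r = p mod \<omega>"
  have \<omega>: "\<omega> \<noteq> 0" "degree \<omega> = card S"
    unfolding \<omega>_def by (simp_all add: poly_of_roots_nonzero degree_poly_of_roots[OF S])
  have p: "p = \<omega> * h + r"
    unfolding h_def r_def by (simp add: mult.commute)
  have deg_r: "r = 0 \<or> degree r < card S"
    using degree_mod_less[OF \<omega>(1), of p] \<omega>(2) r_def by simp
  have "wint_poly v (\<omega> * h) = 0"
  proof (cases "h = 0")
    case False
    have "degree (\<omega> * h) = card S + degree h"
      using \<omega> False by (simp add: degree_mult_eq)
    moreover from this have "degree p = card S + degree h"
      using p deg_r by (cases "r = 0") (simp_all add: degree_add_eq_left)
    ultimately have "degree h < 2 * n - card S"
      using deg_p n by linarith
    then show ?thesis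
      unfolding \<omega>_def by (rule orth)
  qed simp
  then show ?thesis
    using p unfolding \<omega>_def[symmetric] r_def[symmetric] by (simp add: wint_poly_add)
qed

lemma exact_quadrature_lagrange:
  assumes n: "1 \<le> n" and S: "finite S" "card S \<le> 2 * n"
    and orth: "\<And>h. degree h < 2 * n - card S \<Longrightarrow> wint_poly v (poly_of_roots S * h) = 0"
  shows "exact_quadrature v n S (\<lambda>u. if u \<in> S then wint_poly v (lagrange_basis S u) else 0)"
  unfolding exact_quadrature_def
proof (intro conjI allI impI)
  fix u :: real
  assume "u \<notin> S"
  then show "(if u \<in> S then wint_poly v (lagrange_basis S u) else 0) = 0" by simp
next
  fix p :: "real poly"
  assume deg_p: "degree p \<le> 2 * n - 1"
  define r where "r = p mod poly_of_roots S"
  have "wint_poly v p = wint_poly v r"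
    unfolding r_def by (rule wint_poly_mod_poly_of_roots[OF n S(1) deg_p orth])
  also have "\<dots> = (\<Sum>u\<in>S. poly r u * wint_poly v (lagrange_basis S u))"
  proof (cases "r = 0")
    case False
    then have "degree r < card S"
      using degree_mod_less[OF poly_of_roots_nonzero, of p S] degree_poly_of_roots[OF S(1)]
      unfolding r_def by simp
    then show ?thesis
      by (rule wint_poly_lagrange[OF S(1)])
  qed simp
  also have "\<dots> = (\<Sum>u\<in>S. (if u \<in> S then wint_poly v (lagrange_basis S u) else 0) * poly p u)"
  proof (rule sum.cong)
    fix u
    assume "u \<in> S"
    then have "poly (poly_of_roots S) u = 0"
      using poly_poly_of_roots_eq_0_iff[OF S(1)] by simp
    moreover have "poly p u = poly (p div poly_of_roots S * poly_of_roots S + r) u"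
      unfolding r_def div_mult_mod_eq ..
    ultimately have "poly r u = poly p u"
      by simp
    then show "poly r u * wint_poly v (lagrange_basis S u)
        = (if u \<in> S then wint_poly v (lagrange_basis S u) else 0) * poly p u"
      using \<open>u \<in> S\<close> by simp
  qed simp
  finally show "(\<Sum>u\<in>S. (if u \<in> S then wint_poly v (lagrange_basis S u) else 0) * poly p u)
      = wint_poly v p" ..
qed

lemma exact_quadrature_quad_weights:
  assumes "1 \<le> n" "finite S" "card S \<le> 2 * n"
    and "\<And>h. degree h < 2 * n - card S \<Longrightarrow> wint_poly v (poly_of_roots S * h) = 0"
  shows "exact_quadrature v n S (quad_weights v n S)"
  using quad_weights_eq[OF assms(2,3) exact_quadrature_lagrange[OF assms]] exact_quadrature_lagrange[OF assms]
  by simp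

text \<open>Test the formula against \<open>(1 - e t) \<Prod>\<^sub>v (t - v)\<^sup>2\<close>, the product ranging over the nodes other
  than \<open>u\<close> and \<open>e\<close>: it has degree at most \<open>2n - 1\<close>, is nonnegative on \<open>[-1,1]\<close> and vanishes at
  every node except \<open>u\<close>.\<close>
lemma exact_quadrature_weight_nonneg:
  assumes n: "1 \<le> n" and S: "finite S" "S \<subseteq> {-1..1}" "card S \<le> n + 1"
    and e: "e \<in> S" "e = -1 \<or> e = 1" and u: "u \<in> S" "u \<noteq> e"
    and l: "exact_quadrature v n S l"
  shows "0 \<le> l u"
proof -
  define G where "G = poly_of_roots (S - {u, e})"
  define p where "p = [:1, -e:] * G * G"
  have "card S \<ge> 2"
    using card_mono[OF S(1), of "{u, e}"] e u by simp
  have "degree G = card S - 2"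
    unfolding G_def using S(1) e u by (simp add: degree_poly_of_roots card_Diff_subset)
  have "degree p \<le> degree [:1, -e:] + degree G + degree G"
    unfolding p_def by (meson add_le_mono degree_mult_le le_refl order_trans)
  also have "\<dots> \<le> 2 * n - 1"
    using \<open>degree G = card S - 2\<close> \<open>card S \<ge> 2\<close> S(3) n
    by simp arith
  finally have deg_p: "degree p \<le> 2 * n - 1" .
  have poly_p: "poly p t = (1 - e * t) * (poly G t)^2" for t
    unfolding p_def by (simp add: power2_eq_square algebra_simps)
  have G_root: "poly G y = 0 \<longleftrightarrow> y \<in> S - {u, e}" for y
    unfolding G_def using S(1) by (simp add: poly_poly_of_roots_eq_0_iff)
  have "poly p y = 0" if "y \<in> S" "y \<noteq> u" for y
  proof -
    have "y = e \<or> poly G y = 0"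
      using that G_root by blast
    then show ?thesis
      using e(2) by (auto simp: poly_p)
  qed
  then have "l u * poly p u = wint_poly v p"
    by (rule exact_quadrature_at_node[OF S(1) l u(1) deg_p])
  moreover have "0 \<le> wint_poly v p"
    by (rule wint_poly_nonneg) (use e(2) in \<open>auto simp: poly_p\<close>)
  moreover have "0 < poly p u"
  proof -
    have "0 < 1 - e * u"
      using S(2) u e(2) by auto
    moreover have "poly G u \<noteq> 0"
      using G_root by blast
    ultimately show ?thesis
      unfolding poly_p by simp
  qed
  ultimately show ?thesis
    by (metis mult_neg_pos not_le)
qed

lemma exact_quadrature_endpoint_bound:
  assumes n: "1 \<le> n" and S: "finite S" "S \<subseteq> {-1..1}" "card S \<le> n + 1"
    and e: "e \<in> S" "e = -1 \<or> e = 1"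
    and l: "exact_quadrature v n S l" and q: "degree q \<le> n - 1"
  shows "l e * (poly q e)^2 \<le> wint_poly v (q * q)"
proof -
  have "degree (q * q) \<le> 2 * n - 1"
    using degree_mult_le[of q q] q n by linarith
  then have "(\<Sum>u\<in>S. l u * poly (q * q) u) = wint_poly v (q * q)"
    using l unfolding exact_quadrature_def by blast
  then have "wint_poly v (q * q) = (\<Sum>u\<in>S. l u * (poly q u)^2)"
    by (simp add: power2_eq_square)
  also have "\<dots> = l e * (poly q e)^2 + (\<Sum>u\<in>S-{e}. l u * (poly q u)^2)"
    using S(1) e(1) by (simp add: sum.remove)
  finally show ?thesis
    using sum_nonneg[of "S - {e}" "\<lambda>u. l u * (poly q u)^2"]
      exact_quadrature_weight_nonneg[OF n S e _ _ l] by force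
qed

end

section \<open>Legendre polynomials\<close>

lemma poly_integral_pderiv: "poly_integral (pderiv f) = poly f 1 - poly f (-1)"
proof -
  have "poly_integral (pderiv f) = integral\<^sup>L lborel (\<lambda>x. indicator {-1..1::real} x *\<^sub>R poly (pderiv f) x)"
    unfolding wint_poly_def wint_def set_lebesgue_integral_def by simp
  also have "\<dots> = poly f 1 - poly f (-1)"
  proof (rule integral_FTC_atLeastAtMost)
    fix x :: real
    show "((\<lambda>x. poly f x) has_vector_derivative poly (pderiv f) x) (at x within {-1..1})"
      unfolding has_real_derivative_iff_has_vector_derivative[symmetric]
      by (rule DERIV_subset[OF poly_DERIV]) simp
  qed (auto intro: continuous_intros)
  finally show ?thesis .
qed

lemma poly_integral_by_parts:
  "poly_integral (pderiv f * g) = poly f 1 * poly g 1 - poly f (-1) * poly g (-1) - poly_integral (f * pderiv g)"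
  using poly_integral_pderiv[of "f * g"]
  by (simp add: pderiv_mult unit_weight.wint_poly_add mult.commute)

lemma poly_integral_one: "poly_integral 1 = 2"
proof -
  have "pderiv [:0, 1::real:] = 1"
    by (simp add: pderiv_pCons)
  then show ?thesis
    using poly_integral_pderiv[of "[:0, 1:]"] by simp
qed

lemma higher_pderiv_eq_0: "degree (p :: real poly) < k \<Longrightarrow> (pderiv ^^ k) p = 0"
  by (rule poly_eqI) (simp add: coeff_higher_pderiv coeff_eq_0)

lemma higher_pderiv_degree: "(pderiv ^^ degree p) (p :: real poly) = [:fact (degree p) * lead_coeff p:]"
proof (rule poly_eqI)
  fix i
  show "coeff ((pderiv ^^ degree p) p) i = coeff [:fact (degree p) * lead_coeff p:] i"
    by (cases i) (simp_all add: coeff_higher_pderiv pochhammer_fact coeff_eq_0)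
qed

lemma linear_power_dvd_pderiv:
  assumes "[:-a, 1:] ^ Suc k dvd (p :: real poly)"
  shows "[:-a, 1:] ^ k dvd pderiv p"
proof -
  obtain q where q: "p = [:-a, 1:] ^ Suc k * q"
    using assms by (auto elim: dvdE)
  have "pderiv p = [:-a, 1:] ^ Suc k * pderiv q + smult (of_nat (Suc k)) (q * [:-a, 1:] ^ k)"
    unfolding q by (rule lemma_order_pderiv1)
  also have "\<dots> = [:-a, 1:] ^ k * ([:-a, 1:] * pderiv q + smult (of_nat (Suc k)) q)"
    by (simp add: algebra_simps)
  finally have "pderiv p = [:-a, 1:] ^ k * ([:-a, 1:] * pderiv q + smult (of_nat (Suc k)) q)" .
  then show ?thesis by simp
qed

lemma poly_higher_pderiv_root:
  assumes "i < k" "[:-a, 1:] ^ k dvd (p :: real poly)"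
  shows "poly ((pderiv ^^ i) p) a = 0"
  using assms
proof (induction i arbitrary: k p)
  case 0
  then have "[:-a, 1:] dvd p"
    by (meson dvd_power dvd_trans)
  then show ?case
    by (simp add: poly_eq_0_iff_dvd)
next
  case (Suc i)
  then obtain k' where k': "k = Suc k'"
    by (cases k) auto
  then have "poly ((pderiv ^^ i) (pderiv p)) a = 0"
    using Suc linear_power_dvd_pderiv by simp
  then show ?case
    by (simp add: funpow_Suc_right del: funpow.simps)
qed

lemma poly_higher_pderiv_linear_power_mult:
  "poly ((pderiv ^^ j) ([:-a, 1:] ^ j * h)) a = fact j * poly (h :: real poly) a"
proof (induction j arbitrary: h)
  case 0
  then show ?case by simp
next
  case (Suc j)
  have "pderiv ([:-a, 1:] ^ Suc j * h)
      = [:-a, 1:] ^ j * ([:-a, 1:] * pderiv h) + [:-a, 1:] ^ j * smult (of_nat (Suc j)) h"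
    using lemma_order_pderiv1[of a j h] by (simp add: algebra_simps)
  then show ?case
    using Suc[of "[:-a, 1:] * pderiv h"] Suc[of "smult (of_nat (Suc j)) h"]
    by (simp add: funpow_Suc_right higher_pderiv_add higher_pderiv_smult del: funpow.simps)
qed

lemma poly_integral_higher_pderiv_by_parts:
  assumes vanish: "\<And>i. i < k \<Longrightarrow> poly ((pderiv ^^ i) F) 1 = 0 \<and> poly ((pderiv ^^ i) F) (-1) = 0"
  shows "i \<le> k \<Longrightarrow>
    poly_integral ((pderiv ^^ k) F * g) = (-1)^i * poly_integral ((pderiv ^^ (k - i)) F * (pderiv ^^ i) g)"
proof (induction i)
  case 0
  then show ?case by simp
next
  case (Suc i)
  let ?A = "(pderiv ^^ (k - Suc i)) F"
  have "k - i = Suc (k - Suc i)"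
    using Suc(2) by simp
  then have "poly_integral ((pderiv ^^ (k - i)) F * (pderiv ^^ i) g)
      = poly_integral (pderiv ?A * (pderiv ^^ i) g)"
    by simp
  also have "\<dots> = - poly_integral (?A * (pderiv ^^ Suc i) g)"
    using poly_integral_by_parts[of ?A "(pderiv ^^ i) g"] vanish[of "k - Suc i"] Suc(2) by simp
  finally show ?case
    using Suc by simp
qed

definition rodrigues :: "nat \<Rightarrow> real poly" where
  "rodrigues j = [:-1, 0, 1:] ^ j"

text \<open>By Rodrigues' formula, \<open>legendre j\<close> is \<open>2\<^sup>j j!\<close> times the Legendre polynomial \<open>P\<^sub>j\<close>.\<close>
definition legendre :: "nat \<Rightarrow> real poly" where
  "legendre j = (pderiv ^^ j) (rodrigues j)"

lemma rodrigues_factor: "rodrigues j = [:-1, 1:] ^ j * [:1, 1:] ^ j"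
proof -
  have "[:-1, 0, 1:] = [:-1, 1:] * [:1, 1::real:]"
    by simp
  then show ?thesis
    unfolding rodrigues_def by (simp only: power_mult_distrib)
qed

lemma degree_rodrigues: "degree (rodrigues j) = 2 * j"
  unfolding rodrigues_def by (simp add: degree_power_eq)

lemma lead_coeff_rodrigues: "lead_coeff (rodrigues j) = 1"
  unfolding rodrigues_def by (simp add: lead_coeff_power)

lemma degree_legendre: "degree (legendre j) = j"
  unfolding legendre_def degree_higher_pderiv degree_rodrigues by simp

lemma poly_integral_legendre_mult:
  "poly_integral (legendre j * g) = (-1)^j * poly_integral (rodrigues j * (pderiv ^^ j) g)"
proof -
  have "[:-1, 1:] ^ j dvd rodrigues j" "[:-(-1), 1:] ^ j dvd rodrigues j"
    unfolding rodrigues_factor by simp_all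
  then show ?thesis
    unfolding legendre_def
    using poly_integral_higher_pderiv_by_parts[of j "rodrigues j" j g] poly_higher_pderiv_root
    by fastforce
qed

lemma poly_integral_legendre_orthogonal: "degree g < j \<Longrightarrow> poly_integral (legendre j * g) = 0"
  unfolding poly_integral_legendre_mult by (simp add: higher_pderiv_eq_0)

lemma poly_integral_legendre_legendre:
  "poly_integral (legendre i * legendre j) = (if i = j then (-1)^j * fact (2 * j) * poly_integral (rodrigues j) else 0)"
proof (cases i j rule: linorder_cases)
  case less
  then show ?thesis
    using poly_integral_legendre_orthogonal[of "legendre i" j] degree_legendre
    by (simp add: mult.commute)
next
  case greater
  then show ?thesis
    using poly_integral_legendre_orthogonal[of "legendre j" i] degree_legendre by simp
next
  case equal
  have "(pderiv ^^ j) (legendre j) = (pderiv ^^ degree (rodrigues j)) (rodrigues j)"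
    unfolding legendre_def degree_rodrigues by (simp add: funpow_add mult_2)
  also have "\<dots> = [:fact (2 * j):]"
    using higher_pderiv_degree[of "rodrigues j"] lead_coeff_rodrigues degree_rodrigues by simp
  finally show ?thesis
    using equal unfolding poly_integral_legendre_mult
    by (simp add: unit_weight.wint_poly_smult flip: smult_one)
qed

lemma legendre_endpoint_square:
  assumes "e = 1 \<or> e = -1"
  shows "(poly (legendre j) e)^2 = 4^j * (fact j)^2"
proof -
  have "poly (legendre j) 1 = fact j * 2^j"
    unfolding legendre_def rodrigues_factor
    using poly_higher_pderiv_linear_power_mult[of j 1 "[:1, 1:]^j"] by simp
  moreover have "rodrigues j = [:-(-1), 1:]^j * [:-1, 1:]^j"
    unfolding rodrigues_factor by (simp add: mult.commute)
  then have "poly (legendre j) (-1) = fact j * (-2)^j"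
    unfolding legendre_def using poly_higher_pderiv_linear_power_mult[of j "-1" "[:-1, 1:]^j"] by simp
  ultimately show ?thesis
    using assms by (auto simp: power_mult_distrib power2_eq_square simp flip: power_mult_distrib)
qed

lemma poly_integral_rodrigues_Suc:
  "(2 * j + 3) * poly_integral (rodrigues (Suc j)) = - (2 * j + 2) * poly_integral (rodrigues j)"
proof -
  have "poly_integral (rodrigues (Suc j)) = poly_integral (pderiv [:0, 1:] * rodrigues (Suc j))"
    by (simp add: pderiv_pCons)
  also have "\<dots> = - poly_integral ([:0, 1:] * pderiv (rodrigues (Suc j)))"
    using poly_integral_by_parts[of "[:0, 1:]" "rodrigues (Suc j)"] by (simp add: rodrigues_def)
  also have "[:0, 1:] * pderiv (rodrigues (Suc j)) = smult (2 * (real j + 1)) (rodrigues (Suc j) + rodrigues j)"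
  proof (rule poly_ext)
    fix t :: real
    have "pderiv (rodrigues (Suc j)) = smult (of_nat (Suc j)) (rodrigues j) * pderiv [:-1, 0, 1:]"
      unfolding rodrigues_def by (rule pderiv_power_Suc)
    moreover have "pderiv [:-1, 0, 1::real:] = [:0, 2:]"
      by (simp add: pderiv_pCons)
    ultimately have "poly ([:0, 1:] * pderiv (rodrigues (Suc j))) t
        = 2 * (real j + 1) * ((t * t - 1) * poly (rodrigues j) t + poly (rodrigues j) t)"
      by (simp add: algebra_simps)
    then show "poly ([:0, 1:] * pderiv (rodrigues (Suc j))) t
        = poly (smult (2 * (real j + 1)) (rodrigues (Suc j) + rodrigues j)) t"
      by (simp add: rodrigues_def algebra_simps)
  qed
  finally show ?thesis
    by (simp add: unit_weight.wint_poly_smult unit_weight.wint_poly_add algebra_simps)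
qed

lemma poly_integral_rodrigues:
  "(-1)^j * poly_integral (rodrigues j) = 2 * 4^j * (fact j)^2 / fact (2 * j + 1)"
proof (induction j)
  case 0
  then show ?case
    by (simp add: rodrigues_def poly_integral_one)
next
  case (Suc j)
  have "poly_integral (rodrigues (Suc j)) = - ((2 * j + 2) / (2 * j + 3)) * poly_integral (rodrigues j)"
    using poly_integral_rodrigues_Suc[of j] by (simp add: field_simps)
  then have "(-1)^Suc j * poly_integral (rodrigues (Suc j))
      = (2 * j + 2) / (2 * j + 3) * ((-1)^j * poly_integral (rodrigues j))"
    by simp
  also have "\<dots> = (2 * j + 2) / (2 * j + 3) * (2 * 4^j * (fact j)^2 / fact (2 * j + 1))"
    by (simp only: Suc)
  also have "\<dots> = 2 * 4^Suc j * (fact (Suc j))^2 / fact (2 * Suc j + 1)"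
  proof -
    have step: "(2 * x + 2) / (2 * x + 3) * (2 * P * g^2 / F)
        = 2 * (4 * P) * ((x + 1) * g)^2 / ((2 * x + 3) * (2 * x + 2) * F)"
      if "F > 0" "x \<ge> 0" for F x P g :: real
    proof -
      have "(2 * x + 2) / (2 * x + 3) * (2 * P * g^2 / F)
          = ((2 * x + 2) * (2 * x + 2) * (2 * P * g^2)) / ((2 * x + 3) * (2 * x + 2) * F)"
        using that by simp
      also have "(2 * x + 2) * (2 * x + 2) * (2 * P * g^2) = 2 * (4 * P) * ((x + 1) * g)^2"
        by (simp add: power2_eq_square algebra_simps)
      finally show ?thesis .
    qed
    have fact_odd: "fact (2 * Suc j + 1) = (2 * real j + 3) * (2 * real j + 2) * (fact (2 * j + 1) :: real)"
      by (simp add: algebra_simps)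
    have "(fact (Suc j) :: real) = (real j + 1) * fact j"
      by (simp add: algebra_simps)
    then show ?thesis
      unfolding fact_odd using step[of "fact (2 * j + 1)" "real j" "4^j" "fact j"] by (simp add: ac_simps)
  qed
  finally show ?case .
qed

lemma legendre_norm: "poly_integral (legendre j * legendre j) = 2 * 4^j * (fact j)^2 / (2 * j + 1)"
proof -
  have fact_odd: "fact (2 * j + 1) = (2 * real j + 1) * (fact (2 * j) :: real)"
    by simp
  have "poly_integral (legendre j * legendre j) = fact (2 * j) * ((-1)^j * poly_integral (rodrigues j))"
    unfolding poly_integral_legendre_legendre by simp
  also have "\<dots> = fact (2 * j) * (2 * 4^j * (fact j)^2 / ((2 * real j + 1) * fact (2 * j)))"
    by (simp only: poly_integral_rodrigues fact_odd)
  also have "\<dots> = fact (2 * j) * (2 * 4^j * (fact j)^2) / (fact (2 * j) * (2 * real j + 1))"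
    by (simp only: times_divide_eq_right mult.commute[of "2 * real j + 1"])
  also have "\<dots> = 2 * 4^j * (fact j)^2 / (2 * real j + 1)"
    by (rule nonzero_mult_divide_mult_cancel_left) simp
  finally show ?thesis
    by simp
qed

text \<open>With \<open>L\<^sub>j = legendre j\<close>, the kernel \<open>K = \<Sum>\<^bsub>j<n\<^esub> L\<^sub>j(e) L\<^sub>j / \<integral> L\<^sub>j\<^sup>2\<close> satisfies
  \<open>K(e) = \<integral> K\<^sup>2 = \<Sum>\<^bsub>j<n\<^esub> (2j + 1)/2 = n\<^sup>2/2\<close>.\<close>
lemma legendre_endpoint_christoffel:
  assumes e: "e = 1 \<or> e = -1" and n: "1 \<le> n"
  shows "\<exists>q. degree q \<le> n - 1 \<and> poly q e = 1 \<and> poly_integral (q * q) = 2 / (real n)^2"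
proof -
  define N where "N j = poly_integral (legendre j * legendre j)" for j
  define c where "c j = poly (legendre j) e / N j" for j
  define K where "K = (\<Sum>j<n. smult (c j) (legendre j))"
  have N_pos: "N j > 0" for j
    unfolding N_def legendre_norm by simp
  have ratio: "c j * poly (legendre j) e = (2 * real j + 1) / 2" for j
    unfolding c_def N_def legendre_norm using legendre_endpoint_square[OF e, of j]
    by (simp add: power2_eq_square field_simps)
  have sum_ratio: "(\<Sum>j<n. c j * poly (legendre j) e) = real n ^ 2 / 2"
    unfolding ratio by (induction n) (auto simp: field_simps power2_eq_square)
  have "poly_integral (K * K) = (\<Sum>i<n. \<Sum>j<n. c j * c i * poly_integral (legendre i * legendre j))"
    unfolding K_def sum_product
    by (simp add: unit_weight.wint_poly_sum unit_weight.wint_poly_smult mult_smult_left mult_smult_right)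
  also have "\<dots> = (\<Sum>i<n. c i * c i * N i)"
    unfolding poly_integral_legendre_legendre N_def by (simp add: if_distrib[of "(*) _"] cong: if_cong)
  also have "\<dots> = (\<Sum>j<n. c j * poly (legendre j) e)"
    using N_pos by (intro sum.cong) (simp_all add: c_def)
  finally have K_norm: "poly_integral (K * K) = real n ^ 2 / 2"
    using sum_ratio by simp
  have K_e: "poly K e = real n ^ 2 / 2"
    unfolding K_def using sum_ratio by (simp add: poly_sum)
  define q where "q = smult (2 / real n ^ 2) K"
  have "degree K \<le> n - 1"
    unfolding K_def
    by (rule degree_sum_le) (auto intro: order.trans[OF degree_smult_le] simp: degree_legendre)
  then have "degree q \<le> n - 1"
    unfolding q_def using degree_smult_le order.trans by blast
  moreover have "poly q e = 1"
    using K_e n by (simp add: q_def)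
  moreover have "poly_integral (q * q) = (2 / real n ^ 2) * (2 / real n ^ 2) * poly_integral (K * K)"
    unfolding q_def by (simp add: unit_weight.wint_poly_smult mult_smult_left mult_smult_right)
  then have "poly_integral (q * q) = 2 / (real n)^2"
    using K_norm n by (simp add: power2_eq_square)
  ultimately show ?thesis
    by blast
qed

section \<open>The node sets of the family\<close>

locale quadrature_setting = positive_weight w for w :: "real \<Rightarrow> real" +
  fixes n :: nat
  assumes degree_pos: "1 \<le> n"
begin

abbreviation \<phi> where "\<phi> \<equiv> phi_poly w n"
abbreviation \<psi> where "\<psi> \<equiv> psi_poly w n"

lemma psi_weight_eq: "(\<lambda>t. (1 - t^2) * w t) = (\<lambda>t. poly [:1, 0, -1:] t * w t)"
  by (auto simp: power2_eq_square)

lemma positive_weight_psi: "positive_weight (\<lambda>t. (1 - t^2) * w t)"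
  unfolding psi_weight_eq
proof (rule positive_weight_poly_mult)
  fix t :: real
  assume "t \<in> {-1..1}"
  then have "0 \<le> (1 - t) * (1 + t)" by (intro mult_nonneg_nonneg) auto
  then show "0 \<le> poly [:1, 0, -1:] t" by (simp add: algebra_simps)
next
  fix t :: real
  assume "t \<in> {-1<..<1}"
  then have "0 < (1 - t) * (1 + t)" by (intro mult_pos_pos) auto
  then show "0 < poly [:1, 0, -1:] t" by (simp add: algebra_simps)
qed

lemma orthonormal_phi: "orthonormal w n \<phi>"
  unfolding phi_poly_def by (rule orthonormal_orthonormal_poly)

lemma orthonormal_psi: "orthonormal (\<lambda>t. (1 - t^2) * w t) (n - 1) \<psi>"
  unfolding psi_poly_def by (rule positive_weight.orthonormal_orthonormal_poly[OF positive_weight_psi])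

lemma degree_phi: "degree \<phi> = n" and lead_coeff_phi: "lead_coeff \<phi> > 0" and phi_nonzero: "\<phi> \<noteq> 0"
  using orthonormal_phi unfolding orthonormal_def by auto

lemma degree_psi: "degree \<psi> = n - 1" and lead_coeff_psi: "lead_coeff \<psi> > 0" and psi_nonzero: "\<psi> \<noteq> 0"
  using orthonormal_psi unfolding orthonormal_def by auto

lemma phi_orthogonal: "degree q < n \<Longrightarrow> wint_poly w (\<phi> * q) = 0"
  using orthonormal_phi unfolding orthonormal_def by auto

lemma psi_orthogonal: "degree q < n - 1 \<Longrightarrow> wint_poly w ([:1, 0, -1:] * (\<psi> * q)) = 0"
  using orthonormal_psi unfolding orthonormal_def psi_weight_eq wint_poly_weight_mult by auto

lemma wint_poly_phi_mult: "degree q \<le> n \<Longrightarrow> wint_poly w (\<phi> * q) = coeff q n / lead_coeff \<phi>"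
  by (rule orthonormal_wint_poly_mult[OF orthonormal_phi])

lemma wint_poly_psi_mult:
  "degree q \<le> n - 1 \<Longrightarrow> wint_poly w ([:1, 0, -1:] * (\<psi> * q)) = coeff q (n - 1) / lead_coeff \<psi>"
  using positive_weight.orthonormal_wint_poly_mult[OF positive_weight_psi orthonormal_psi]
  unfolding psi_weight_eq wint_poly_weight_mult by simp

lemma splits_inside_phi: "splits_inside \<phi>"
  by (rule splits_inside_if_orthogonal[OF phi_nonzero]) (simp add: phi_orthogonal degree_phi)

lemma splits_inside_psi: "splits_inside \<psi>"
  by (rule positive_weight.splits_inside_if_orthogonal[OF positive_weight_psi psi_nonzero])
    (use orthonormal_psi degree_psi in \<open>auto simp: orthonormal_def\<close>)

lemma phi_endpoint_signs: "poly \<phi> 1 > 0" "(-1)^n * poly \<phi> (-1) > 0"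
  using splits_inside_endpoint_signs[OF splits_inside_phi lead_coeff_phi] degree_phi by auto

lemma psi_endpoint_signs: "poly \<psi> 1 > 0" "(-1)^(n-1) * poly \<psi> (-1) > 0"
  using splits_inside_endpoint_signs[OF splits_inside_psi lead_coeff_psi] degree_psi by auto

text \<open>A common root x would give \<open>\<phi> = (t - x) q\<close> and \<open>\<psi> = (t - x) r\<close>; then
  \<open>\<phi> (1 - t\<^sup>2) r = (1 - t\<^sup>2) \<psi> q\<close> is integrated in two ways, giving values of opposite signs.\<close>
lemma phi_psi_no_common_root: "\<not> (poly \<phi> x = 0 \<and> poly \<psi> x = 0)"
proof
  assume roots: "poly \<phi> x = 0 \<and> poly \<psi> x = 0"
  have "n \<ge> 2"
  proof (rule ccontr)
    assume "\<not> n \<ge> 2"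
    then have "degree \<psi> = 0"
      using degree_psi by simp
    then obtain c where "\<psi> = [:c:]"
      by (metis degree_eq_zeroE)
    then show False
      using roots psi_nonzero by simp
  qed
  obtain q where q: "\<phi> = [:-x, 1:] * q"
    using roots by (metis dvdE poly_eq_0_iff_dvd)
  obtain r where r: "\<psi> = [:-x, 1:] * r"
    using roots by (metis dvdE poly_eq_0_iff_dvd)
  have "q \<noteq> 0" "r \<noteq> 0"
    using q r phi_nonzero psi_nonzero by auto
  then have "degree \<phi> = Suc (degree q)" "degree \<psi> = Suc (degree r)"
    unfolding q r by (simp_all add: degree_mult_eq del: mult_pCons_left)
  then have deg_q: "degree q = n - 1" and deg_r: "degree r = n - 2"
    using degree_phi degree_psi by simp_all
  have lead_q: "lead_coeff q = lead_coeff \<phi>" and lead_r: "lead_coeff r = lead_coeff \<psi>"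
    unfolding q r by (simp_all add: lead_coeff_mult del: mult_pCons_left)
  have "degree ([:1, 0, -1:] * r) = 2 + degree r"
    using \<open>r \<noteq> 0\<close> by (simp add: degree_mult_eq del: mult_pCons_left)
  then have "degree ([:1, 0, -1:] * r) = n"
    using deg_r \<open>n \<ge> 2\<close> by simp
  moreover have "lead_coeff ([:1, 0, -1:] * r) = - lead_coeff \<psi>"
    using lead_r by (simp add: lead_coeff_mult del: mult_pCons_left)
  ultimately have "wint_poly w (\<phi> * ([:1, 0, -1:] * r)) = - lead_coeff \<psi> / lead_coeff \<phi>"
    using wint_poly_phi_mult[of "[:1, 0, -1:] * r"] by simp
  moreover have "\<phi> * ([:1, 0, -1:] * r) = [:1, 0, -1:] * (\<psi> * q)"
    by (subst q, subst r) (simp add: algebra_simps)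
  then have "wint_poly w (\<phi> * ([:1, 0, -1:] * r)) = lead_coeff \<phi> / lead_coeff \<psi>"
    using wint_poly_psi_mult[of q] deg_q lead_q by simp
  ultimately have "- (lead_coeff \<psi> / lead_coeff \<phi>) = lead_coeff \<phi> / lead_coeff \<psi>"
    by simp
  then show False
    using divide_pos_pos[OF lead_coeff_psi lead_coeff_phi] divide_pos_pos[OF lead_coeff_phi lead_coeff_psi]
    by linarith
qed

definition exact_node_set :: "real set \<Rightarrow> bool" where
  "exact_node_set S \<longleftrightarrow> finite S \<and> S \<subseteq> {-1..1} \<and> card S \<le> n + 1 \<and>
     exact_quadrature w n S (quad_weights w n S)"

lemma exact_node_set_union_zero_set:
  assumes P: "splits_inside P" "P \<noteq> 0" and E: "E \<subseteq> {-1, 1}" and card: "card E + degree P \<le> n + 1"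
    and orth: "\<And>h. degree h < 2 * n - (card E + degree P) \<Longrightarrow> wint_poly w (poly_of_roots E * P * h) = 0"
  shows "exact_node_set (E \<union> zero_set P)"
proof -
  have Z: "finite (zero_set P)" "zero_set P \<subseteq> {-1<..<1}" "card (zero_set P) = degree P"
    using P poly_roots_finite unfolding splits_inside_def zero_set_def by auto
  have fin_E: "finite E"
    using E finite_subset by blast
  have disj: "E \<inter> zero_set P = {}"
    using E Z(2) by fastforce
  have card_union: "card (E \<union> zero_set P) = card E + degree P"
    using card_Un_disjoint[OF fin_E Z(1) disj] Z(3) by simp
  have roots: "poly_of_roots (E \<union> zero_set P) = smult (1 / lead_coeff P) (poly_of_roots E * P)"
    using poly_of_roots_union[OF fin_E Z(1) disj] poly_of_roots_zero_set[OF P] by simp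
  have "exact_quadrature w n (E \<union> zero_set P) (quad_weights w n (E \<union> zero_set P))"
  proof (rule exact_quadrature_quad_weights[OF degree_pos])
    show "finite (E \<union> zero_set P)" "card (E \<union> zero_set P) \<le> 2 * n"
      using fin_E Z(1) card card_union degree_pos by auto
    show "wint_poly w (poly_of_roots (E \<union> zero_set P) * h) = 0"
      if "degree h < 2 * n - card (E \<union> zero_set P)" for h
      using orth[of h] that unfolding roots card_union by (simp add: wint_poly_smult)
  qed
  then show ?thesis
    unfolding exact_node_set_def using fin_E Z E card card_union by auto
qed

lemma exact_node_set_gauss: "exact_node_set (zero_set \<phi>)"
  using exact_node_set_union_zero_set[OF splits_inside_phi phi_nonzero, of "{}"]
  by (simp add: degree_phi phi_orthogonal poly_of_roots_def)

lemma exact_node_set_lobatto: "exact_node_set (zero_set ([:1, 0, -1:] * \<psi>))"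
proof -
  have "poly ([:1, 0, -1:] * \<psi>) t = (1 - t) * (1 + t) * poly \<psi> t" for t
    by (simp add: algebra_simps)
  then have "zero_set ([:1, 0, -1:] * \<psi>) = {-1, 1} \<union> zero_set \<psi>"
    unfolding zero_set_def by auto
  moreover have "exact_node_set ({-1, 1} \<union> zero_set \<psi>)"
  proof (rule exact_node_set_union_zero_set[OF splits_inside_psi psi_nonzero])
    show "card {-1, 1::real} + degree \<psi> \<le> n + 1"
      using degree_psi degree_pos by simp
    fix h :: "real poly"
    assume "degree h < 2 * n - (card {-1, 1::real} + degree \<psi>)"
    then have "degree h < n - 1"
      using degree_psi degree_pos by simp
    moreover have "poly_of_roots {-1, 1} * \<psi> * h = - ([:1, 0, -1:] * (\<psi> * h))"
      by (rule poly_ext) (simp add: poly_of_roots_def algebra_simps)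
    ultimately show "wint_poly w (poly_of_roots {-1, 1} * \<psi> * h) = 0"
      by (simp only: wint_poly_minus psi_orthogonal minus_zero)
  qed auto
  ultimately show ?thesis by simp
qed


definition radau_poly :: "real \<Rightarrow> real \<Rightarrow> real poly" where
  "radau_poly c a = \<phi> - smult a ([:1, c:] * \<psi>)"

lemma P_poly_eq_radau_poly:
  "0 \<le> a \<Longrightarrow> P_poly w n a = radau_poly (-1) a"
  "a < 0 \<Longrightarrow> P_poly w n a = radau_poly 1 a"
  unfolding P_poly_def radau_poly_def by simp_all

lemma poly_radau_poly: "poly (radau_poly c a) t = poly \<phi> t - a * ((1 + c * t) * poly \<psi> t)"
  unfolding radau_poly_def by (simp add: algebra_simps)

lemma radau_poly_degree_lead:
  assumes c: "c = -1 \<or> c = 1" "c * a \<le> 0"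
  shows "degree (radau_poly c a) = n" "lead_coeff (radau_poly c a) > 0"
proof -
  have "c \<noteq> 0"
    using c by auto
  then have "degree ([:1, c:] * \<psi>) = Suc (degree \<psi>)"
    using psi_nonzero by (simp add: degree_mult_eq del: mult_pCons_left)
  then have deg: "degree ([:1, c:] * \<psi>) = n"
    using degree_psi degree_pos by simp
  have "lead_coeff ([:1, c:] * \<psi>) = c * lead_coeff \<psi>"
    using \<open>c \<noteq> 0\<close> by (simp add: lead_coeff_mult del: mult_pCons_left)
  then have "coeff (radau_poly c a) n = lead_coeff \<phi> - (c * a) * lead_coeff \<psi>"
    unfolding radau_poly_def using deg degree_phi by simp
  also have "\<dots> > 0"
    using c(2) lead_coeff_phi lead_coeff_psi mult_nonpos_nonneg[of "c * a" "lead_coeff \<psi>"] by linarith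
  finally have pos: "coeff (radau_poly c a) n > 0" .
  have "degree (radau_poly c a) \<le> n"
    unfolding radau_poly_def using deg degree_phi
    by (intro degree_diff_le) (auto intro: order.trans[OF degree_smult_le])
  then show "degree (radau_poly c a) = n"
    using pos le_degree[of "radau_poly c a" n] by fastforce
  then show "lead_coeff (radau_poly c a) > 0"
    using pos by simp
qed

lemma radau_poly_quasi_orthogonal:
  assumes c: "c = -1 \<or> c = 1" and h: "degree h < n - 1"
  shows "wint_poly w ([:1, -c:] * (radau_poly c a * h)) = 0"
proof -
  have "[:1, -c:] * (radau_poly c a * h) = \<phi> * ([:1, -c:] * h) - smult a ([:1, 0, -1:] * (\<psi> * h))"
  proof (rule poly_ext)
    fix t
    have "c * c = 1"
      using c by auto
    then have "(1 - c * t) * (1 + c * t) = 1 - t * t"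
      by (simp add: algebra_simps)
    then show "poly ([:1, -c:] * (radau_poly c a * h)) t
        = poly (\<phi> * ([:1, -c:] * h) - smult a ([:1, 0, -1:] * (\<psi> * h))) t"
      unfolding radau_poly_def
      by (simp add: algebra_simps) (metis (no_types, opaque_lifting) mult.assoc mult.left_commute)
  qed
  moreover have "degree [:1, -c::real:] \<le> 1"
    by simp
  then have "degree ([:1, -c:] * h) < n"
    using degree_mult_le[of "[:1, -c:]" h] h by arith
  ultimately show ?thesis
    using phi_orthogonal psi_orthogonal[OF h] by (simp add: wint_poly_diff wint_poly_smult)
qed

lemma radau_poly_endpoint_signs:
  assumes c: "c = -1 \<or> c = 1" "c * a \<le> 0"
  shows "poly (radau_poly c a) 1 > 0" "(-1)^n * poly (radau_poly c a) (-1) > 0"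
proof -
  have "a * (1 + c) \<le> 0" "0 \<le> a * (1 - c)"
    using c by auto
  then have "a * (1 + c) * poly \<psi> 1 \<le> 0" "0 \<le> a * (1 - c) * ((-1)^(n-1) * poly \<psi> (-1))"
    using psi_endpoint_signs by (simp_all add: mult_nonpos_nonneg)
  moreover have "n = Suc (n - 1)"
    using degree_pos by simp
  then have "(-1::real)^n = - ((-1)^(n-1))"
    by (metis mult_minus1 power_Suc)
  then have "(-1)^n * poly (radau_poly c a) (-1)
      = (-1)^n * poly \<phi> (-1) + a * (1 - c) * ((-1)^(n-1) * poly \<psi> (-1))"
    unfolding poly_radau_poly by (simp add: algebra_simps)
  ultimately show "poly (radau_poly c a) 1 > 0" "(-1)^n * poly (radau_poly c a) (-1) > 0"
    using phi_endpoint_signs unfolding poly_radau_poly by (simp_all add: algebra_simps)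
qed

lemma splits_inside_radau_poly:
  assumes c: "c = -1 \<or> c = 1" "c * a \<le> 0"
  shows "splits_inside (radau_poly c a)"
proof -
  have "positive_weight (\<lambda>t. poly [:1, -c:] t * w t)"
    by (rule positive_weight_poly_mult) (use c in auto)
  then show ?thesis
  proof (rule positive_weight.splits_inside_if_quasi_orthogonal)
    show "radau_poly c a \<noteq> 0" "1 \<le> degree (radau_poly c a)"
      using radau_poly_degree_lead[OF c] degree_pos by auto
    show "wint_poly (\<lambda>t. poly [:1, -c:] t * w t) (radau_poly c a * q) = 0"
      if "degree q < degree (radau_poly c a) - 1" for q
      unfolding wint_poly_weight_mult
      using radau_poly_quasi_orthogonal[OF c(1), of q a] that radau_poly_degree_lead[OF c] by simp
    show "poly (radau_poly c a) 1 > 0" "(-1)^degree (radau_poly c a) * poly (radau_poly c a) (-1) > 0"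
      using radau_poly_endpoint_signs[OF c] radau_poly_degree_lead[OF c] by simp_all
  qed
qed

lemma exact_node_set_radau:
  assumes c: "c = -1 \<or> c = 1" "c * a \<le> 0"
  shows "exact_node_set (insert c (zero_set (radau_poly c a)))"
proof -
  have "exact_node_set ({c} \<union> zero_set (radau_poly c a))"
  proof (rule exact_node_set_union_zero_set[OF splits_inside_radau_poly[OF c]])
    show "radau_poly c a \<noteq> 0" "card {c} + degree (radau_poly c a) \<le> n + 1"
      using radau_poly_degree_lead[OF c] by auto
    fix h :: "real poly"
    assume "degree h < 2 * n - (card {c} + degree (radau_poly c a))"
    then have "degree h < n - 1"
      using radau_poly_degree_lead[OF c] by simp
    moreover have "poly_of_roots {c} * radau_poly c a * h = smult (-c) ([:1, -c:] * (radau_poly c a * h))"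
      by (rule poly_ext) (use c in \<open>auto simp: poly_of_roots_def algebra_simps\<close>)
    ultimately show "wint_poly w (poly_of_roots {c} * radau_poly c a * h) = 0"
      using radau_poly_quasi_orthogonal[OF c(1)] by (simp only: wint_poly_smult mult_zero_right)
  qed (use c in auto)
  then show ?thesis by simp
qed

lemma exact_node_set_node_sets: "S \<in> node_sets w n \<Longrightarrow> exact_node_set S"
  unfolding node_sets_def
  using exact_node_set_gauss exact_node_set_lobatto P_poly_eq_radau_poly
    exact_node_set_radau[of "-1"] exact_node_set_radau[of 1]
  by auto


lemma node_sets_cases:
  assumes "S \<in> node_sets w n"
  obtains (gauss) "S = zero_set \<phi>"
    | (lobatto) "S = zero_set ([:1, 0, -1:] * \<psi>)"
    | (radau) c a where "c = -1 \<or> c = 1" "c * a < 0" "S = insert c (zero_set (radau_poly c a))"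
proof -
  from assms consider "S = zero_set \<phi>" | "S = zero_set ([:1, 0, -1:] * \<psi>)"
    | a where "0 < a" "S = insert (-1) (zero_set (P_poly w n a))"
    | a where "a < 0" "S = insert 1 (zero_set (P_poly w n a))"
    unfolding node_sets_def by blast
  then show ?thesis
  proof cases
    case (3 a)
    then show ?thesis
      using radau[of "-1" a] P_poly_eq_radau_poly(1)[of a] by simp
  next
    case (4 a)
    then show ?thesis
      using radau[of 1 a] P_poly_eq_radau_poly(2)[of a] by simp
  qed (use gauss lobatto in auto)
qed

lemma radau_node_set_in_node_sets:
  assumes "c = -1 \<or> c = 1" "c * a < 0"
  shows "insert c (zero_set (radau_poly c a)) \<in> node_sets w n"
proof -
  consider "c = -1" "0 < a" | "c = 1" "a < 0"
    using assms by fastforce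
  then show ?thesis
  proof cases
    case 1
    then have "insert (-1) (zero_set (P_poly w n a)) \<in> node_sets w n"
      unfolding node_sets_def by blast
    then show ?thesis
      using 1 P_poly_eq_radau_poly(1)[of a] by simp
  next
    case 2
    then have "insert 1 (zero_set (P_poly w n a)) \<in> node_sets w n"
      unfolding node_sets_def by blast
    then show ?thesis
      using 2 P_poly_eq_radau_poly(2)[of a] by simp
  qed
qed

lemma radau_poly_root_iff:
  assumes x: "x \<in> {-1<..<1}" and c: "c = -1 \<or> c = 1" "c * a < 0"
  shows "poly (radau_poly c a) x = 0 \<longleftrightarrow>
    poly \<psi> x \<noteq> 0 \<and> sgn (poly \<phi> x / poly \<psi> x) = - c \<and> a = poly \<phi> x / ((1 + c * x) * poly \<psi> x)"
proof
  have cx: "1 + c * x > 0"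
    using x c by auto
  assume "poly (radau_poly c a) x = 0"
  then have \<phi>: "poly \<phi> x = a * (1 + c * x) * poly \<psi> x"
    unfolding poly_radau_poly by simp
  then have \<psi>: "poly \<psi> x \<noteq> 0"
    using phi_psi_no_common_root[of x] by auto
  have "sgn a = - c"
    using c by (auto simp: sgn_if)
  moreover have "sgn (1 + c * x) = 1"
    using cx by simp
  moreover have "poly \<phi> x / poly \<psi> x = a * (1 + c * x)"
    using \<phi> \<psi> by simp
  moreover have "(1 + c * x) * poly \<psi> x \<noteq> 0"
    using \<psi> cx by simp
  then have "a = poly \<phi> x / ((1 + c * x) * poly \<psi> x)"
    unfolding \<phi> mult.assoc by (metis nonzero_mult_div_cancel_right)
  ultimately show "poly \<psi> x \<noteq> 0 \<and> sgn (poly \<phi> x / poly \<psi> x) = - c \<and> a = poly \<phi> x / ((1 + c * x) * poly \<psi> x)"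
    using \<psi> by (simp add: sgn_mult)
next
  assume "poly \<psi> x \<noteq> 0 \<and> sgn (poly \<phi> x / poly \<psi> x) = - c \<and> a = poly \<phi> x / ((1 + c * x) * poly \<psi> x)"
  moreover have "1 + c * x \<noteq> 0"
    using x c by auto
  ultimately show "poly (radau_poly c a) x = 0"
    unfolding poly_radau_poly by simp
qed

definition node_set_through :: "real \<Rightarrow> real set" where
  "node_set_through x =
     (if poly \<psi> x = 0 then zero_set ([:1, 0, -1:] * \<psi>)
      else if poly \<phi> x = 0 then zero_set \<phi>
      else let c = - sgn (poly \<phi> x / poly \<psi> x)
           in insert c (zero_set (radau_poly c (poly \<phi> x / ((1 + c * x) * poly \<psi> x)))))"

lemma node_set_through_in_node_sets:
  assumes x: "x \<in> {-1<..<1}"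
  shows "node_set_through x \<in> node_sets w n" "x \<in> node_set_through x"
proof -
  consider "poly \<psi> x = 0" | "poly \<psi> x \<noteq> 0" "poly \<phi> x = 0" | "poly \<psi> x \<noteq> 0" "poly \<phi> x \<noteq> 0"
    by blast
  then have "node_set_through x \<in> node_sets w n \<and> x \<in> node_set_through x"
  proof cases
    case 3
    define r where "r = poly \<phi> x / poly \<psi> x"
    define c where "c = - sgn r"
    define a where "a = poly \<phi> x / ((1 + c * x) * poly \<psi> x)"
    have "r \<noteq> 0"
      using 3 unfolding r_def by simp
    then have c: "c = -1 \<or> c = 1"
      unfolding c_def by (auto simp: sgn_if)
    have "1 + c * x > 0"
      using x c by auto
    moreover have "a = r / (1 + c * x)"
      unfolding a_def r_def by simp
    ultimately have "c * a < 0"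
      using \<open>r \<noteq> 0\<close> unfolding c_def by (auto simp: sgn_if mult_less_0_iff)
    moreover have "node_set_through x = insert c (zero_set (radau_poly c a))"
      using 3 unfolding node_set_through_def c_def a_def r_def by (simp add: Let_def)
    ultimately show ?thesis
      using radau_node_set_in_node_sets[OF c] radau_poly_root_iff[OF x c] 3
      unfolding zero_set_def c_def a_def r_def by auto
  qed (auto simp: node_set_through_def node_sets_def zero_set_def)
  then show "node_set_through x \<in> node_sets w n" "x \<in> node_set_through x"
    by auto
qed

lemma node_set_through_unique:
  assumes x: "x \<in> {-1<..<1}" and S: "S \<in> node_sets w n" "x \<in> S"
  shows "S = node_set_through x"
  using S(1)
proof (cases rule: node_sets_cases)
  case gauss
  then have "poly \<phi> x = 0"
    using S(2) unfolding zero_set_def by simp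
  then show ?thesis
    using gauss phi_psi_no_common_root[of x] unfolding node_set_through_def by auto
next
  case lobatto
  then have "(1 - x) * (1 + x) * poly \<psi> x = 0"
    using S(2) unfolding zero_set_def by (simp add: algebra_simps)
  then show ?thesis
    using lobatto x unfolding node_set_through_def by auto
next
  case (radau c a)
  then have "x \<noteq> c"
    using x by auto
  then have "poly (radau_poly c a) x = 0"
    using radau(3) S(2) unfolding zero_set_def by simp
  then have "poly \<psi> x \<noteq> 0" "sgn (poly \<phi> x / poly \<psi> x) = - c"
    "a = poly \<phi> x / ((1 + c * x) * poly \<psi> x)"
    using radau_poly_root_iff[OF x radau(1,2)] by auto
  moreover from this have "poly \<phi> x \<noteq> 0"
    using radau(1) by auto
  ultimately show ?thesis
    using radau(3) unfolding node_set_through_def by (simp add: Let_def)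
qed

lemma Sigma_eq_node_set_through: "x \<in> {-1<..<1} \<Longrightarrow> Sigma w n x = node_set_through x"
  unfolding Sigma_def
  by (rule the_equality) (use node_set_through_in_node_sets node_set_through_unique in auto)

lemma exact_node_set_Sigma: "x \<in> {-1<..<1} \<Longrightarrow> exact_node_set (Sigma w n x)"
  using Sigma_eq_node_set_through node_set_through_in_node_sets exact_node_set_node_sets by simp

end

section \<open>Endpoint weights\<close>

lemma AE_interval_witness:
  assumes "AE t in lborel. t \<in> {-1..1::real} \<longrightarrow> P t"
  obtains t where "t \<in> {-1..1}" "P t"
proof -
  have "\<exists>t\<in>{-1..1}. P t"
  proof (rule ccontr)
    assume none: "\<not> (\<exists>t\<in>{-1..1}. P t)"
    from assms have "AE t in lborel. t \<notin> {-1..1::real}"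
      by eventually_elim (use none in auto)
    then have "emeasure lborel {-1..1::real} = 0"
      by (subst (asm) AE_iff_measurable[of "{-1..1::real}"]) auto
    then show False
      by simp
  qed
  then show ?thesis
    using that by blast
qed

lemma positive_weight_if_bounded_below:
  assumes "weight_function w" "0 < m" "AE t in lborel. t \<in> {-1..1} \<longrightarrow> m \<le> w t"
  shows "positive_weight w"
proof
  show "set_integrable lborel {-1..1::real} w" "\<And>t. t \<in> {-1..1} \<Longrightarrow> 0 \<le> w t"
    using assms(1) unfolding weight_function_def by auto
  show "AE t in lborel. t \<in> {-1..1} \<longrightarrow> 0 < w t"
    using assms(3) by eventually_elim (use assms(2) in auto)
qed

context quadrature_setting
begin

lemma lambda_x_endpoint_bound:
  assumes M: "AE t in lborel. t \<in> {-1..1} \<longrightarrow> w t \<le> M"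
    and x: "x \<in> {-1<..<1}" and e: "e = -1 \<or> e = 1"
  shows "lambda_x w n x e \<le> 2 * M / (real n)^2"
proof -
  have "AE t in lborel. t \<in> {-1..1} \<longrightarrow> 0 < w t \<and> w t \<le> M"
    using M pos_AE by eventually_elim auto
  then have "0 < M"
    by (elim AE_interval_witness) auto
  define S where "S = Sigma w n x"
  have S: "finite S" "S \<subseteq> {-1..1}" "card S \<le> n + 1" "exact_quadrature w n S (quad_weights w n S)"
    using exact_node_set_Sigma[OF x] unfolding S_def exact_node_set_def by auto
  show ?thesis
  proof (cases "e \<in> S")
    case False
    then have "lambda_x w n x e = 0"
      using S(4) unfolding lambda_x_def S_def exact_quadrature_def by auto
    then show ?thesis
      using \<open>0 < M\<close> by simp
  next
    case True
    obtain q where q: "degree q \<le> n - 1" "poly q e = 1" "poly_integral (q * q) = 2 / (real n)^2"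
      using legendre_endpoint_christoffel[OF _ degree_pos] e by blast
    have "lambda_x w n x e * (poly q e)^2 \<le> wint_poly w (q * q)"
      unfolding lambda_x_def S_def[symmetric]
      by (rule exact_quadrature_endpoint_bound[OF degree_pos S(1-3) True e S(4) q(1)])
    also have "\<dots> \<le> M * poly_integral (q * q)"
      by (rule wint_poly_square_le[OF M])
    finally show ?thesis
      using q by (simp add: mult.commute)
  qed
qed

end

theorem lemma3p7:
  "\<exists>C>0. \<forall>(w :: real \<Rightarrow> real) (m :: real) (M :: real) (n :: nat) (x :: real).
     weight_function w \<and> 0 < m \<and>
     (AE t in lborel. t \<in> {-1..1} \<longrightarrow> m \<le> w t \<and> w t \<le> M) \<and>
     1 \<le> n \<and> -1 < x \<and> x < 1 \<longrightarrow>
       lambda_x w n x (-1) \<le> C * M^2 / m * (1 / (real n)^2) \<and>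
       lambda_x w n x 1 \<le> C * M^2 / m * (1 / (real n)^2)"
proof (intro exI[of _ 2] conjI allI impI)
  fix w :: "real \<Rightarrow> real" and m M :: real and n :: nat and x :: real
  assume h: "weight_function w \<and> 0 < m \<and>
     (AE t in lborel. t \<in> {-1..1} \<longrightarrow> m \<le> w t \<and> w t \<le> M) \<and> 1 \<le> n \<and> -1 < x \<and> x < 1"
  then have bounds: "AE t in lborel. t \<in> {-1..1} \<longrightarrow> m \<le> w t"
    "AE t in lborel. t \<in> {-1..1} \<longrightarrow> w t \<le> M"
    by (auto elim: eventually_mono)
  interpret positive_weight w
    using h bounds(1) by (intro positive_weight_if_bounded_below) auto
  interpret quadrature_setting w n
    by unfold_locales (use h in auto)
  have "m \<le> M"
    using h by (elim conjE AE_interval_witness) auto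
  then have "M \<le> M^2 / m"
    using h by (simp add: field_simps power2_eq_square mult_right_mono)
  then have "2 * M / (real n)^2 \<le> 2 * (M^2 / m) / (real n)^2"
    by (intro divide_right_mono mult_left_mono) auto
  then have "2 * M / (real n)^2 \<le> 2 * M^2 / m * (1 / (real n)^2)"
    by simp
  then show "lambda_x w n x (-1) \<le> 2 * M^2 / m * (1 / (real n)^2)"
    "lambda_x w n x 1 \<le> 2 * M^2 / m * (1 / (real n)^2)"
    using lambda_x_endpoint_bound[OF bounds(2)] h by fastforce+
qed simp

end
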